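(* Let $f(x,y)\in\mathbb{C}[x,y]$ be non-zero and let $L$ be the set of lower edges of $\mathrm{Newt}(f)$. Let $f^*(x,y):=\prod_{e\in L}f_e^*(x,y)$. Then for every $\phi\in[0,2\pi)$ there is $r_0>0$ such that for all $0<r<r_0$, $$\big|B(f(x,re^{\imath\phi}))-B(f^*(x,e^{\imath\phi}))\big|<1.$$
   Context: $\mathrm{Newt}(f)$ is the convex hull of $\mathrm{supp}(f)=\{(i,j):a_{i,j}\ne0\}$ for $f=\sum a_{i,j}x^iy^j$. An edge (one-dimensional face) $e$ of $\mathrm{Newt}(f)$, not parallel to the $y$-axis, is a lower edge if $\mathrm{Newt}(f)$ lies in the closed upper half-plane determined by the line through $e$. If $e$ connects vertices $(a,b)$ and $(a',b')$ with $a<a'$, set $f_e(x,y):=\sum_{(i,j)\in e}a_{i,j}x^iy^j$ and $f_e^*(x,y):=x^{-a}f_e(x,y)$. For a univariate complex polynomial $g$ with non-zero roots $r_1e^{\imath\phi_1},\dots,r_ne^{\imath\phi_n}$ (with multiplicity, $r_i>0$, $\phi_i\in[0,2\pi)$), $B(g):=\sup_{0\le\alpha\le\beta\le2\pi}\big|N_{\alpha,\beta}(g)-\frac{n(\beta-\alpha)}{2\pi}\big|$, where $N_{\alpha,\beta}(g)$ is the number of these roots with $\phi_i\in[\alpha,\beta]$. *)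

theory Defs
  imports "HOL-Analysis.Analysis" "HOL-Computational_Algebra.Polynomial"
begin

text \<open>A bivariate polynomial f(x,y) = sum a_ij x^i y^j over C is represented as
  a polynomial in x whose coefficients are polynomials in y:
  a_ij = coeff (coeff f i) j.\<close>

definition supp2 :: "complex poly poly \<Rightarrow> (nat \<times> nat) set" where
  "supp2 f = {(i, j). coeff (coeff f i) j \<noteq> 0}"

definition newt :: "complex poly poly \<Rightarrow> (real \<times> real) set" where
  "newt f = convex hull ((\<lambda>(i, j). (real i, real j)) ` supp2 f)"

definition lower_edges :: "complex poly poly \<Rightarrow> (real \<times> real) set set" where
  "lower_edges f = {e. e face_of newt f \<and> aff_dim e = 1 \<and>
      (\<exists>m c. (\<forall>p\<in>e. snd p = m * fst p + c) \<and> (\<forall>p\<in>newt f. snd p \<ge> m * fst p + c))}"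

definition edge_supp :: "complex poly poly \<Rightarrow> (real \<times> real) set \<Rightarrow> (nat \<times> nat) set" where
  "edge_supp f e = {(i, j). (i, j) \<in> supp2 f \<and> (real i, real j) \<in> e}"

text \<open>x-coordinate a of the left endpoint (a,b) of the edge e (a vertex of Newt(f),
  hence a support point).\<close>
definition edge_left :: "complex poly poly \<Rightarrow> (real \<times> real) set \<Rightarrow> nat" where
  "edge_left f e = Min (fst ` edge_supp f e)"

text \<open>f_e^*(x,y) = x^(-a) f_e(x,y).\<close>
definition edge_star :: "complex poly poly \<Rightarrow> (real \<times> real) set \<Rightarrow> complex poly poly" where
  "edge_star f e = (\<Sum>(i, j)\<in>edge_supp f e.
      monom (monom (coeff (coeff f i) j) j) (i - edge_left f e))"

definition fstar :: "complex poly poly \<Rightarrow> complex poly poly" where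
  "fstar f = (\<Prod>e\<in>lower_edges f. edge_star f e)"

definition eval_y :: "complex poly poly \<Rightarrow> complex \<Rightarrow> complex poly" where
  "eval_y f c = map_poly (\<lambda>q. poly q c) f"

definition nz_roots :: "complex poly \<Rightarrow> complex set" where
  "nz_roots g = {z. poly g z = 0 \<and> z \<noteq> 0}"

definition N_ang :: "real \<Rightarrow> real \<Rightarrow> complex poly \<Rightarrow> nat" where
  "N_ang \<alpha> \<beta> g = (\<Sum>z\<in>{z\<in>nz_roots g. \<alpha> \<le> Arg2pi z \<and> Arg2pi z \<le> \<beta>}. order z g)"

definition n_nz :: "complex poly \<Rightarrow> nat" where
  "n_nz g = (\<Sum>z\<in>nz_roots g. order z g)"

definition B :: "complex poly \<Rightarrow> real" where
  "B g = Sup {\<bar>real (N_ang \<alpha> \<beta> g) - real (n_nz g) * (\<beta> - \<alpha>) / (2 * pi)\<bar> | \<alpha> \<beta>.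
              0 \<le> \<alpha> \<and> \<alpha> \<le> \<beta> \<and> \<beta> \<le> 2 * pi}"

end

theory Submission
  imports Defs "HOL-Complex_Analysis.Complex_Analysis"
    "HOL-Computational_Algebra.Fundamental_Theorem_Algebra" "HOL-Library.Real_Mod"
begin

text \<open>Fix \<open>w = e\<^sup>i\<^sup>\<phi>\<close> and let \<open>r \<rightarrow> 0\<close>. For a lower edge \<open>e\<close> on the line \<open>j = m i + c\<close> and a root \<open>z\<close> of
  \<open>f\<^sub>e\<^sup>*(x, w)\<close>, substitute \<open>x = r\<^sup>-\<^sup>m u\<close>: the monomials on \<open>e\<close> all acquire the same factor \<open>r\<^sup>c\<close>,
  the others a higher power of \<open>r\<close>, so by Rouch\'e's theorem the disc of radius \<open>r\<^sup>-\<^sup>m \<delta>\<close> about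
  \<open>r\<^sup>-\<^sup>m z\<close> contains exactly \<open>ord\<^sub>z f\<^sub>e\<^sup>*\<close> roots of \<open>f(x, r w)\<close>. The widths of the lower edges add up
  to an upper bound for the number of non-zero roots, so these pairwise disjoint discs contain all
  of them. Scaling by
  the positive real \<open>r\<^sup>-\<^sup>m\<close> does not change arguments, so the non-zero roots of \<open>f(x, r w)\<close> can be
  matched with those of \<open>f\<^sup>*(x, w)\<close> with arguments within \<open>\<epsilon>\<close> modulo \<open>2\<pi>\<close>; such a matching moves
  the discrepancy \<open>B\<close> by at most \<open>n \<epsilon> / \<pi>\<close>, which is below 1 for \<open>\<epsilon> = \<pi> / (n + 1)\<close>.\<close>

section \<open>Angular discrepancy of a multiset of points\<close>

definition arc_count :: "real \<Rightarrow> real \<Rightarrow> complex multiset \<Rightarrow> nat" where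
  "arc_count a b X = size {#z \<in># X. a \<le> Arg2pi z \<and> Arg2pi z \<le> b#}"

definition arc_deviation :: "complex multiset \<Rightarrow> real \<Rightarrow> real \<Rightarrow> real" where
  "arc_deviation X a b = \<bar>real (arc_count a b X) - real (size X) * (b - a) / (2 * pi)\<bar>"

definition arc_discrepancy :: "complex multiset \<Rightarrow> real" where
  "arc_discrepancy X = Sup {arc_deviation X a b | a b. 0 \<le> a \<and> a \<le> b \<and> b \<le> 2 * pi}"

lemma arc_count_le_size: "arc_count a b X \<le> size X"
  unfolding arc_count_def by (rule size_filter_mset_lesseq)

lemma arc_count_image_mset:
  "arc_count a b (image_mset f M) = size {#p \<in># M. a \<le> Arg2pi (f p) \<and> Arg2pi (f p) \<le> b#}"
  unfolding arc_count_def filter_mset_image_mset by simp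

lemma arc_deviation_le_twice_size:
  assumes "0 \<le> a" "a \<le> b" "b \<le> 2 * pi"
  shows "arc_deviation X a b \<le> 2 * real (size X)"
proof -
  have "real (size X) * (b - a) \<le> real (size X) * (2 * pi)"
    using assms by (intro mult_left_mono) auto
  then have "real (size X) * (b - a) / (2 * pi) \<le> real (size X)"
    by (simp add: pos_divide_le_eq)
  moreover have "0 \<le> real (size X) * (b - a) / (2 * pi)" using assms by simp
  ultimately show ?thesis
    using arc_count_le_size[of a b X] unfolding arc_deviation_def by linarith
qed

lemma arc_deviation_le_discrepancy:
  assumes "0 \<le> a" "a \<le> b" "b \<le> 2 * pi"
  shows "arc_deviation X a b \<le> arc_discrepancy X"
  unfolding arc_discrepancy_def
proof (rule cSup_upper)
  show "arc_deviation X a b \<in> {arc_deviation X a b | a b. 0 \<le> a \<and> a \<le> b \<and> b \<le> 2 * pi}"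
    using assms by blast
  show "bdd_above {arc_deviation X a b | a b. 0 \<le> a \<and> a \<le> b \<and> b \<le> 2 * pi}"
    using arc_deviation_le_twice_size by (auto intro!: bdd_aboveI[of _ "2 * real (size X)"])
qed

lemma arc_discrepancy_nonneg: "0 \<le> arc_discrepancy X"
  using arc_deviation_le_discrepancy[of 0 0 X] by (simp add: arc_deviation_def)

lemma arc_discrepancy_le:
  assumes "\<And>a b. 0 \<le> a \<Longrightarrow> a \<le> b \<Longrightarrow> b \<le> 2 * pi \<Longrightarrow> arc_deviation X a b \<le> C"
  shows "arc_discrepancy X \<le> C"
  unfolding arc_discrepancy_def
proof (rule cSup_least)
  show "{arc_deviation X a b | a b. 0 \<le> a \<and> a \<le> b \<and> b \<le> 2 * pi} \<noteq> {}"
    using pi_gt_zero by fastforce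
qed (use assms in auto)

lemma arc_count_estimate:
  assumes "0 \<le> a" "a \<le> b" "b \<le> 2 * pi"
  shows "real (size X) * (b - a) / (2 * pi) - arc_discrepancy X \<le> real (arc_count a b X)"
    and "real (arc_count a b X) \<le> real (size X) * (b - a) / (2 * pi) + arc_discrepancy X"
  using arc_deviation_le_discrepancy[OF assms, of X] unfolding arc_deviation_def by linarith+

definition angle_close :: "real \<Rightarrow> real \<Rightarrow> real \<Rightarrow> bool" where
  "angle_close e x y \<longleftrightarrow> (\<exists>k::int. \<bar>x - y - 2 * pi * of_int k\<bar> < e)"

lemma angle_close_sym: "angle_close e x y \<Longrightarrow> angle_close e y x"
proof -
  assume "angle_close e x y"
  then obtain k :: int where "\<bar>x - y - 2 * pi * of_int k\<bar> < e" unfolding angle_close_def by blast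
  then have "\<bar>y - x - 2 * pi * of_int (- k)\<bar> < e" by (simp add: abs_minus_commute algebra_simps)
  then show "angle_close e y x" unfolding angle_close_def by blast
qed

lemma angle_close_gap:
  assumes "angle_close e x y" "e \<le> x - y" "x - y \<le> 2 * pi - e"
  shows False
proof -
  obtain k :: int where k: "\<bar>x - y - 2 * pi * of_int k\<bar> < e"
    using assms(1) unfolding angle_close_def by blast
  consider "k \<le> 0" | "k \<ge> 1" by linarith
  then show False
  proof cases
    case 1
    then have "2 * pi * of_int k \<le> 0" by (simp add: mult_nonneg_nonpos)
    then show False using k assms by linarith
  next
    case 2
    then have "2 * pi \<le> 2 * pi * of_int k" by simp
    then show False using k assms by linarith
  qed
qed

lemma angle_close_inside:
  assumes "angle_close e x y" "e \<le> x" "x \<le> 2 * pi - e" "0 \<le> y" "y < 2 * pi"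
  shows "\<bar>x - y\<bar> < e"
proof (rule ccontr)
  assume "\<not> \<bar>x - y\<bar> < e"
  then consider "e \<le> x - y" | "e \<le> y - x" by linarith
  then show False
  proof cases
    case 1 then show False using angle_close_gap[OF assms(1)] assms by linarith
  next
    case 2 then show False using angle_close_gap[OF angle_close_sym[OF assms(1)]] assms by linarith
  qed
qed

lemma sgn_eq_cis_Arg2pi:
  assumes "z \<noteq> 0"
  shows "sgn z = cis (Arg2pi z)"
proof -
  have "z = of_real (cmod z) * cis (Arg2pi z)"
    using Arg2pi[of z] by (simp add: is_Arg_def cis_conv_exp)
  then have "sgn z = sgn (of_real (cmod z)) * sgn (cis (Arg2pi z))" by (metis sgn_mult)
  then show ?thesis using assms by (simp add: sgn_of_real)
qed

lemma eventually_angle_close_near: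
  assumes z: "z \<noteq> 0" and e: "e > 0"
  shows "eventually (\<lambda>d. \<forall>u. dist z u < d \<longrightarrow> angle_close e (Arg2pi u) (Arg2pi z)) (at_right 0)"
proof -
  have "continuous (at 1) Arg" by (rule continuous_at_Arg) (auto simp: complex_nonpos_Reals_iff)
  then obtain d0 where d0: "d0 > 0" "\<And>v. dist v 1 < d0 \<Longrightarrow> \<bar>Arg v\<bar> < e"
    unfolding continuous_at_eps_delta using e by (force simp: dist_real_def)
  define d1 where "d1 = min d0 1"
  have d1: "d1 > 0" "\<And>v. dist v 1 < d1 \<Longrightarrow> v \<noteq> 0 \<and> \<bar>Arg v\<bar> < e"
    unfolding d1_def using d0 by auto
  show ?thesis
  proof (rule eventually_at_rightI[of _ "d1 * cmod z"], intro allI impI)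
    fix d u assume "d \<in> {0<..<d1 * cmod z}" "dist z u < d"
    then have close: "cmod (u - z) < d1 * cmod z" by (simp add: dist_norm norm_minus_commute)
    define v where "v = u / z"
    have u: "u = z * v" unfolding v_def using z by simp
    have "dist v 1 = cmod (u - z) / cmod z"
      unfolding v_def dist_norm using z by (simp add: norm_divide[symmetric] diff_divide_distrib)
    also have "\<dots> < d1" using close z by (simp add: divide_less_eq)
    finally have "v \<noteq> 0" and Arg_v: "\<bar>Arg v\<bar> < e" using d1(2) by blast+
    then have "cis (Arg2pi u) = cis (Arg2pi z + Arg v)"
      using z by (simp add: u sgn_eq_cis_Arg2pi[symmetric] sgn_mult cis_Arg cis_mult[symmetric])
    then obtain n :: int where "Arg2pi z + Arg v = Arg2pi u + of_int n * (2 * pi)"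
      unfolding cis_eq_iff rcong_altdef by blast
    then have "Arg2pi u - Arg2pi z - 2 * pi * of_int (- n) = Arg v" by (simp add: algebra_simps)
    then have "\<bar>Arg2pi u - Arg2pi z - 2 * pi * of_int (- n)\<bar> < e" using Arg_v by simp
    then show "angle_close e (Arg2pi u) (Arg2pi z)" unfolding angle_close_def by blast
  qed (use z d1 in simp)
qed

lemma size_filter_mset_mono:
  assumes "\<And>x. x \<in># M \<Longrightarrow> P x \<Longrightarrow> Q x"
  shows "size (filter_mset P M) \<le> size (filter_mset Q M)"
  by (rule size_mset_mono[OF filter_mset_mono_strong[OF subset_mset.refl assms]])

lemma arc_count_fst_le_snd:
  assumes "\<And>p. p \<in># M \<Longrightarrow> a \<le> Arg2pi (fst p) \<Longrightarrow> Arg2pi (fst p) \<le> b \<Longrightarrow>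
             x \<le> Arg2pi (snd p) \<and> Arg2pi (snd p) \<le> y"
  shows "arc_count a b (image_mset fst M) \<le> arc_count x y (image_mset snd M)"
  unfolding arc_count_image_mset by (rule size_filter_mset_mono) (use assms in blast)

lemma arc_count_snd_le_fst:
  assumes "\<And>p. p \<in># M \<Longrightarrow> x \<le> Arg2pi (snd p) \<Longrightarrow> Arg2pi (snd p) \<le> y \<Longrightarrow>
             a \<le> Arg2pi (fst p) \<and> Arg2pi (fst p) \<le> b"
  shows "arc_count x y (image_mset snd M) \<le> arc_count a b (image_mset fst M)"
  unfolding arc_count_image_mset by (rule size_filter_mset_mono) (use assms in blast)

lemma arc_count_fst_add_snd_le:
  assumes "\<And>p. p \<in># M \<Longrightarrow> a \<le> Arg2pi (fst p) \<Longrightarrow> Arg2pi (fst p) \<le> b \<Longrightarrow>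
             \<not> (x \<le> Arg2pi (snd p) \<and> Arg2pi (snd p) \<le> y)"
  shows "arc_count a b (image_mset fst M) + arc_count x y (image_mset snd M) \<le> size M"
proof -
  let ?P = "\<lambda>p. a \<le> Arg2pi (fst p) \<and> Arg2pi (fst p) \<le> b"
  have "arc_count x y (image_mset snd M) \<le> size {#p \<in># M. \<not> ?P p#}"
    unfolding arc_count_image_mset by (rule size_filter_mset_mono) (use assms in blast)
  moreover have "size {#p \<in># M. ?P p#} + size {#p \<in># M. \<not> ?P p#} = size M"
    using multiset_partition[of M ?P] by (metis size_union)
  ultimately show ?thesis unfolding arc_count_image_mset by linarith
qed

context
  fixes M :: "(complex \<times> complex) multiset" and e :: real
  assumes close: "\<And>p. p \<in># M \<Longrightarrow> angle_close e (Arg2pi (fst p)) (Arg2pi (snd p))"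
    and e_pos: "e > 0"
begin

text \<open>This handles
  arcs reaching within \<open>e\<close> of the cut at \<open>0 \<equiv> 2\<pi>\<close>, which cannot simply be widened by \<open>e\<close>.\<close>

lemma arc_count_excess_le_via_complement:
  assumes xy: "0 \<le> x" "x \<le> y" "y \<le> 2 * pi" "y - x = 2 * pi - (b - a) - 2 * e"
    and apart: "\<And>p. p \<in># M \<Longrightarrow> a \<le> Arg2pi (fst p) \<Longrightarrow> Arg2pi (fst p) \<le> b \<Longrightarrow>
                  \<not> (x \<le> Arg2pi (snd p) \<and> Arg2pi (snd p) \<le> y)"
  shows "real (arc_count a b (image_mset fst M)) - real (size M) * (b - a) / (2 * pi)
         \<le> arc_discrepancy (image_mset snd M) + real (size M) * e / pi"
proof -
  have "arc_count a b (image_mset fst M) + arc_count x y (image_mset snd M) \<le> size M"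
    by (rule arc_count_fst_add_snd_le[OF apart])
  moreover have "real (size M) * (y - x) / (2 * pi)
                 = real (size M) - real (size M) * (b - a) / (2 * pi) - real (size M) * e / pi"
    unfolding xy(4) by (simp add: field_simps)
  ultimately show ?thesis using arc_count_estimate(1)[OF xy(1-3), of "image_mset snd M"] by simp
qed

lemma arc_count_excess_le:
  assumes ab: "0 \<le> a" "a \<le> b" "b \<le> 2 * pi"
  shows "real (arc_count a b (image_mset fst M)) - real (size M) * (b - a) / (2 * pi)
         \<le> arc_discrepancy (image_mset snd M) + real (size M) * e / pi"
proof -
  define n where "n = real (size M)"
  define D where "D = arc_discrepancy (image_mset snd M)"
  have D: "0 \<le> D" unfolding D_def by (rule arc_discrepancy_nonneg)
  have n_pos: "0 \<le> n" unfolding n_def by simp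
  consider (long) "2 * pi - 2 * e \<le> b - a"
    | (inner) "e \<le> a" "b \<le> 2 * pi - e"
    | (left) "b - a < 2 * pi - 2 * e" "a < e"
    | (right) "b - a < 2 * pi - 2 * e" "2 * pi - e < b" by linarith
  then show ?thesis
  proof cases
    case long
    have "n * (2 * pi - 2 * e) / (2 * pi) \<le> n * (b - a) / (2 * pi)"
      using long n_pos by (intro divide_right_mono mult_left_mono) auto
    moreover have "n * (2 * pi - 2 * e) / (2 * pi) = n - n * e / pi" by (simp add: field_simps)
    ultimately show ?thesis
      using arc_count_le_size[of a b "image_mset fst M"] D unfolding n_def D_def by simp
  next
    case inner
    have "arc_count a b (image_mset fst M) \<le> arc_count (a - e) (b + e) (image_mset snd M)"
    proof (rule arc_count_fst_le_snd)
      fix p assume p: "p \<in># M" "a \<le> Arg2pi (fst p)" "Arg2pi (fst p) \<le> b"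
      have "\<bar>Arg2pi (fst p) - Arg2pi (snd p)\<bar> < e"
        by (rule angle_close_inside[OF close[OF p(1)]]) (use p inner ab in \<open>auto simp: Arg2pi_ge_0 Arg2pi_lt_2pi\<close>)
      then show "a - e \<le> Arg2pi (snd p) \<and> Arg2pi (snd p) \<le> b + e" using p by linarith
    qed
    moreover have "n * (b + e - (a - e)) / (2 * pi) = n * (b - a) / (2 * pi) + n * e / pi"
      by (simp add: field_simps)
    ultimately show ?thesis
      using arc_count_estimate(2)[of "a - e" "b + e" "image_mset snd M"] inner ab e_pos
      unfolding n_def by simp
  next
    case left
    show ?thesis
    proof (rule arc_count_excess_le_via_complement[of "b + e" "2 * pi + a - e"])
      fix p assume p: "p \<in># M" "a \<le> Arg2pi (fst p)" "Arg2pi (fst p) \<le> b"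
      show "\<not> (b + e \<le> Arg2pi (snd p) \<and> Arg2pi (snd p) \<le> 2 * pi + a - e)"
        using angle_close_gap[OF angle_close_sym[OF close[OF p(1)]]] p by force
    qed (use left ab e_pos in auto)
  next
    case right
    show ?thesis
    proof (rule arc_count_excess_le_via_complement[of "b + e - 2 * pi" "a - e"])
      fix p assume p: "p \<in># M" "a \<le> Arg2pi (fst p)" "Arg2pi (fst p) \<le> b"
      show "\<not> (b + e - 2 * pi \<le> Arg2pi (snd p) \<and> Arg2pi (snd p) \<le> a - e)"
        using angle_close_gap[OF close[OF p(1)]] p by force
    qed (use right ab e_pos in auto)
  qed
qed

lemma arc_count_deficit_le:
  assumes ab: "0 \<le> a" "a \<le> b" "b \<le> 2 * pi"
  shows "real (size M) * (b - a) / (2 * pi) - real (arc_count a b (image_mset fst M))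
         \<le> arc_discrepancy (image_mset snd M) + real (size M) * e / pi"
proof -
  define n where "n = real (size M)"
  define D where "D = arc_discrepancy (image_mset snd M)"
  have D: "0 \<le> D" unfolding D_def by (rule arc_discrepancy_nonneg)
  have n_pos: "0 \<le> n" unfolding n_def by simp
  have "n * (b - a) / (2 * pi) - real (arc_count a b (image_mset fst M)) \<le> D + n * e / pi"
  proof (cases "b - a < 2 * e")
    case True
    have "n * (b - a) / (2 * pi) \<le> n * (2 * e) / (2 * pi)"
      using True n_pos by (intro divide_right_mono mult_left_mono) auto
    then show ?thesis using D by simp
  next
    case False
    have "arc_count (a + e) (b - e) (image_mset snd M) \<le> arc_count a b (image_mset fst M)"
    proof (rule arc_count_snd_le_fst)
      fix p assume p: "p \<in># M" "a + e \<le> Arg2pi (snd p)" "Arg2pi (snd p) \<le> b - e"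
      have "\<bar>Arg2pi (snd p) - Arg2pi (fst p)\<bar> < e"
        by (rule angle_close_inside[OF angle_close_sym[OF close[OF p(1)]]])
           (use p ab in \<open>auto simp: Arg2pi_ge_0 Arg2pi_lt_2pi\<close>)
      then show "a \<le> Arg2pi (fst p) \<and> Arg2pi (fst p) \<le> b" using p by linarith
    qed
    moreover have "n * (b - e - (a + e)) / (2 * pi) = n * (b - a) / (2 * pi) - n * e / pi"
      by (simp add: field_simps)
    ultimately show ?thesis
      using arc_count_estimate(1)[of "a + e" "b - e" "image_mset snd M"] False ab e_pos
      unfolding n_def D_def by auto
  qed
  then show ?thesis unfolding n_def D_def .
qed

lemma arc_discrepancy_fst_le:
  "arc_discrepancy (image_mset fst M) \<le> arc_discrepancy (image_mset snd M) + real (size M) * e / pi"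
proof (rule arc_discrepancy_le)
  fix a b :: real assume ab: "0 \<le> a" "a \<le> b" "b \<le> 2 * pi"
  show "arc_deviation (image_mset fst M) a b
        \<le> arc_discrepancy (image_mset snd M) + real (size M) * e / pi"
    using arc_count_excess_le[OF ab] arc_count_deficit_le[OF ab]
    unfolding arc_deviation_def size_image_mset abs_le_iff by linarith
qed

end

lemma arc_discrepancy_paired:
  fixes M :: "(complex \<times> complex) multiset"
  assumes "\<And>p. p \<in># M \<Longrightarrow> angle_close e (Arg2pi (fst p)) (Arg2pi (snd p))" "e > 0"
  shows "\<bar>arc_discrepancy (image_mset fst M) - arc_discrepancy (image_mset snd M)\<bar>
         \<le> real (size M) * e / pi"
proof -
  have "\<And>p. p \<in># image_mset prod.swap M \<Longrightarrow> angle_close e (Arg2pi (fst p)) (Arg2pi (snd p))"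
    using assms(1) angle_close_sym by auto
  from arc_discrepancy_fst_le[of "image_mset prod.swap M" e, OF this assms(2)]
  have "arc_discrepancy (image_mset snd M) \<le> arc_discrepancy (image_mset fst M) + real (size M) * e / pi"
    by (simp add: multiset.map_comp comp_def)
  then show ?thesis using arc_discrepancy_fst_le[of M e, OF assms] by linarith
qed

lemma sum_filter_mset_eq_if_disjoint:
  fixes A :: "'a multiset" and D :: "'i \<Rightarrow> 'a \<Rightarrow> bool"
  assumes fin: "finite C"
    and disj: "\<And>c c' x. c \<in> C \<Longrightarrow> c' \<in> C \<Longrightarrow> D c x \<Longrightarrow> D c' x \<Longrightarrow> c = c'"
    and size: "size A \<le> (\<Sum>c\<in>C. size {#x \<in># A. D c x#})"
  shows "(\<Sum>c\<in>C. {#x \<in># A. D c x#}) = A"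
proof -
  let ?S = "\<Sum>c\<in>C. {#x \<in># A. D c x#}"
  have "?S \<subseteq># A"
  proof (rule mset_subset_eqI)
    fix x
    have count: "count ?S x = (\<Sum>c\<in>C. if D c x then count A x else 0)"
      by (simp add: count_sum)
    show "count ?S x \<le> count A x"
    proof (cases "\<exists>c\<in>C. D c x")
      case True
      then obtain c0 where c0: "c0 \<in> C" "D c0 x" by blast
      have "(\<Sum>c\<in>C. if D c x then count A x else 0) = (\<Sum>c\<in>C. if c = c0 then count A x else 0)"
        using disj c0 by (intro sum.cong refl) (metis (full_types))
      then show ?thesis unfolding count using c0 fin by simp
    qed (simp add: count)
  qed
  moreover have "size ?S = (\<Sum>c\<in>C. size {#x \<in># A. D c x#})"
    using fin by (induction C rule: finite_induct) auto
  ultimately show ?thesis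
    using size mset_subset_size[of ?S A] by (metis leD subset_mset.le_neq_trans)
qed

lemma image_mset_sum: "image_mset f (\<Sum>x\<in>A. g x) = (\<Sum>x\<in>A. image_mset f (g x))"
  by (induction A rule: infinite_finite_induct) auto

lemma arc_discrepancy_clusters:
  assumes fin: "finite C"
    and close: "\<And>c x. c \<in> C \<Longrightarrow> x \<in># X c \<Longrightarrow> angle_close e (Arg2pi x) (Arg2pi (p c))"
    and e: "e > 0"
  shows "\<bar>arc_discrepancy (\<Sum>c\<in>C. X c) - arc_discrepancy (\<Sum>c\<in>C. replicate_mset (size (X c)) (p c))\<bar>
         \<le> real (size (\<Sum>c\<in>C. X c)) * e / pi"
proof -
  define M where "M = (\<Sum>c\<in>C. image_mset (\<lambda>x. (x, p c)) (X c))"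
  have "image_mset fst M = (\<Sum>c\<in>C. X c)" "image_mset snd M = (\<Sum>c\<in>C. replicate_mset (size (X c)) (p c))"
    unfolding M_def image_mset_sum by (simp_all add: multiset.map_comp comp_def image_mset_const_eq)
  moreover have "angle_close e (Arg2pi (fst q)) (Arg2pi (snd q))" if "q \<in># M" for q
    using that close fin unfolding M_def by (auto simp: set_mset_sum)
  ultimately show ?thesis
    using arc_discrepancy_paired[of M e] e by (metis size_image_mset)
qed

section \<open>The lower boundary of the Newton polygon\<close>

lemma finite_supp2: "finite (supp2 f)"
proof -
  define D where "D = Max ((\<lambda>i. degree (coeff f i)) ` {..degree f})"
  have "supp2 f \<subseteq> {..degree f} \<times> {..D}"
  proof
    fix x assume "x \<in> supp2 f"
    then obtain i j where x: "x = (i, j)" and nz: "coeff (coeff f i) j \<noteq> 0"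
      by (auto simp: supp2_def)
    then have i: "i \<le> degree f" by (metis coeff_0 le_degree)
    have "j \<le> degree (coeff f i)" using nz by (simp add: le_degree)
    also have "\<dots> \<le> D" unfolding D_def using i by (intro Max_ge) auto
    finally show "x \<in> {..degree f} \<times> {..D}" using i x by auto
  qed
  then show ?thesis by (rule finite_subset) auto
qed

lemma supp2_fst_le_degree: "(i, j) \<in> supp2 f \<Longrightarrow> i \<le> degree f"
  by (metis (mono_tags) case_prod_conv coeff_0 le_degree mem_Collect_eq supp2_def)

lemma supp2_in_newt: "(i, j) \<in> supp2 f \<Longrightarrow> (real i, real j) \<in> newt f"
  unfolding newt_def by (rule hull_inc) force

lemma newt_above_line:
  assumes "\<And>i j. (i, j) \<in> supp2 f \<Longrightarrow> m * real i + c \<le> real j" "p \<in> newt f"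
  shows "m * fst p + c \<le> snd p"
proof -
  have "newt f \<subseteq> {x. inner (- m, 1::real) x \<ge> c}"
    unfolding newt_def
  proof (rule hull_minimal)
    show "(\<lambda>(i, j). (real i, real j)) ` supp2 f \<subseteq> {x. c \<le> inner (- m, 1) x}"
      by (force dest: assms(1) simp: inner_Pair)
  qed (rule convex_halfspace_ge)
  then show ?thesis using assms(2) by (cases p) (auto simp: inner_Pair)
qed

lemma newt_inter_supporting_line:
  assumes "\<And>p. p \<in> newt f \<Longrightarrow> m * fst p + c \<le> snd p"
  shows "newt f \<inter> {p. snd p = m * fst p + c} face_of newt f"
    and "aff_dim (newt f \<inter> {p. snd p = m * fst p + c}) \<le> 1"
proof -
  have line: "{p. snd p = m * fst p + c} = {x. inner (m, -1::real) x = - c}"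
    by (auto simp: inner_Pair)
  show "newt f \<inter> {p. snd p = m * fst p + c} face_of newt f"
    unfolding line
  proof (rule face_of_Int_supporting_hyperplane_le)
    show "convex (newt f)" unfolding newt_def by simp
    fix x assume "x \<in> newt f"
    then show "inner (m, - 1) x \<le> - c" using assms by (cases x) (force simp: inner_Pair)
  qed
  have "aff_dim (newt f \<inter> {p. snd p = m * fst p + c}) \<le> aff_dim {x. inner (m, -1::real) x = - c}"
    by (rule aff_dim_subset) (auto simp: line)
  also have "\<dots> = 1" using aff_dim_hyperplane[of "(m, -1::real)" "-c"] by (simp add: zero_prod_def)
  finally show "aff_dim (newt f \<inter> {p. snd p = m * fst p + c}) \<le> 1" .
qed

definition lower_edge_line :: "complex poly poly \<Rightarrow> (real \<times> real) set \<Rightarrow> real \<Rightarrow> real \<Rightarrow> bool" where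
  "lower_edge_line f e m c \<longleftrightarrow> (\<forall>i j. (i, j) \<in> supp2 f \<longrightarrow> m * real i + c \<le> real j) \<and>
     e = newt f \<inter> {p. snd p = m * fst p + c} \<and>
     (\<exists>i1 j1 i2 j2. (i1, j1) \<in> supp2 f \<and> (i2, j2) \<in> supp2 f \<and> real j1 = m * real i1 + c \<and>
        real j2 = m * real i2 + c \<and> i1 < i2)"

lemma lower_edge_line_in_lower_edges:
  assumes "lower_edge_line f e m c"
  shows "e \<in> lower_edges f"
proof -
  have above: "\<And>i j. (i, j) \<in> supp2 f \<Longrightarrow> m * real i + c \<le> real j"
    and e: "e = newt f \<inter> {p. snd p = m * fst p + c}"
    using assms by (auto simp: lower_edge_line_def)
  obtain i1 j1 i2 j2 where pts: "(i1, j1) \<in> supp2 f" "(i2, j2) \<in> supp2 f"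
    "real j1 = m * real i1 + c" "real j2 = m * real i2 + c" "i1 < i2"
    using assms unfolding lower_edge_line_def by blast
  have above_newt: "\<And>p. p \<in> newt f \<Longrightarrow> m * fst p + c \<le> snd p"
    using newt_above_line[OF above] .
  note face = newt_inter_supporting_line[of f m c, OF above_newt, folded e]
  have p1: "(real i1, real j1) \<in> e" and p2: "(real i2, real j2) \<in> e"
    using pts supp2_in_newt[of i1 j1 f] supp2_in_newt[of i2 j2 f] e by auto
  have "aff_dim e \<noteq> 0" using p1 p2 pts(5) by (auto simp: aff_dim_eq_0)
  moreover have "aff_dim e \<noteq> -1" using p1 by (auto simp: aff_dim_empty[symmetric])
  moreover note aff_dim_geq[of e] face(2)
  ultimately have "aff_dim e = 1" by linarith
  then show ?thesis
    unfolding lower_edges_def using face(1) e above_newt by blast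
qed

lemma lower_edge_eq_newt_inter_line:
  assumes face: "e face_of newt f" and dim: "aff_dim e = 1"
    and on_line: "\<forall>p\<in>e. snd p = m * fst p + c" and above: "\<forall>p\<in>newt f. m * fst p + c \<le> snd p"
  shows "e = newt f \<inter> {p. snd p = m * fst p + c}"
proof (rule ccontr)
  let ?G = "newt f \<inter> {p. snd p = m * fst p + c}"
  note G = newt_inter_supporting_line[of f m c]
  assume "e \<noteq> ?G"
  moreover have "e \<subseteq> ?G" using face_of_imp_subset[OF face] on_line by auto
  then have "e face_of ?G" by (rule face_of_subset[OF face]) auto
  ultimately have "aff_dim e < aff_dim ?G"
    using face_of_aff_dim_lt face_of_imp_convex[OF G(1)] above by blast
  then show False using G(2) above dim by simp
qed

lemma lower_edge_two_support_points:
  assumes face: "e face_of newt f" and dim: "aff_dim e = 1"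
    and on_line: "\<forall>p\<in>e. snd p = m * fst p + c"
  obtains i1 j1 i2 j2 where "(i1, j1) \<in> supp2 f" "(i2, j2) \<in> supp2 f"
    "(real i1, real j1) \<in> e" "(real i2, real j2) \<in> e" "i1 < i2"
proof -
  have "compact ((\<lambda>(i, j). (real i, real j)) ` supp2 f)"
    using finite_supp2 by (intro finite_imp_compact) auto
  then obtain S where S: "S \<subseteq> (\<lambda>(i, j). (real i, real j)) ` supp2 f" "e = convex hull S"
    using face_of_convex_hull_subset face unfolding newt_def by metis
  have Se: "S \<subseteq> e" using S(2) hull_subset[of S convex] by simp
  have "\<exists>p\<in>S. \<exists>q\<in>S. fst p < fst q"
  proof (rule ccontr)
    assume "\<not> ?thesis"
    then have "\<forall>p\<in>S. \<forall>q\<in>S. fst p = fst q" by (meson linorder_neqE)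
    with Se on_line have "\<forall>p\<in>S. \<forall>q\<in>S. p = q" by (metis prod.expand subsetD)
    then have "S = {} \<or> (\<exists>a. S = {a})" by blast
    then have "aff_dim e \<le> 0" using S(2) by auto
    then show False using dim by simp
  qed
  then obtain p q where pq: "p \<in> S" "q \<in> S" "fst p < fst q" by blast
  obtain i1 j1 where "(i1, j1) \<in> supp2 f" "p = (real i1, real j1)" using pq(1) S(1) by auto
  moreover obtain i2 j2 where "(i2, j2) \<in> supp2 f" "q = (real i2, real j2)" using pq(2) S(1) by auto
  ultimately show thesis using that[of i1 j1 i2 j2] pq Se by auto
qed

lemma lower_edge_obtain_line:
  assumes "e \<in> lower_edges f"
  obtains m c where "lower_edge_line f e m c"
proof -
  obtain m c where face: "e face_of newt f" and dim: "aff_dim e = 1"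
    and on_line: "\<forall>p\<in>e. snd p = m * fst p + c" and above: "\<forall>p\<in>newt f. m * fst p + c \<le> snd p"
    using assms unfolding lower_edges_def by blast
  obtain i1 j1 i2 j2 where "(i1, j1) \<in> supp2 f" "(i2, j2) \<in> supp2 f"
    "(real i1, real j1) \<in> e" "(real i2, real j2) \<in> e" "i1 < i2"
    by (rule lower_edge_two_support_points[OF face dim on_line])
  then have "lower_edge_line f e m c"
    unfolding lower_edge_line_def
    using lower_edge_eq_newt_inter_line[OF face dim on_line above] on_line above supp2_in_newt
    by fastforce
  then show thesis by (rule that)
qed

lemma edge_supp_lower_edge_line:
  assumes "lower_edge_line f e m c"
  shows "edge_supp f e = {(i, j). (i, j) \<in> supp2 f \<and> real j = m * real i + c}"
  using assms supp2_in_newt unfolding lower_edge_line_def edge_supp_def by auto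

lemma lower_edge_line_same_slope:
  assumes "lower_edge_line f e m c" "lower_edge_line f e' m c'"
  shows "e = e'"
proof -
  obtain i1 j1 where 1: "(i1, j1) \<in> supp2 f" "real j1 = m * real i1 + c"
    using assms(1) unfolding lower_edge_line_def by blast
  obtain i2 j2 where 2: "(i2, j2) \<in> supp2 f" "real j2 = m * real i2 + c'"
    using assms(2) unfolding lower_edge_line_def by blast
  have "m * real i1 + c' \<le> real j1" "m * real i2 + c \<le> real j2"
    using assms 1(1) 2(1) unfolding lower_edge_line_def by blast+
  then have "c = c'" using 1 2 by linarith
  then show ?thesis using assms unfolding lower_edge_line_def by auto
qed

lemma finite_lower_edges: "finite (lower_edges f)"
proof -
  have "polytope (newt f)" unfolding polytope_def newt_def using finite_supp2 by blast
  then have "finite {F. F face_of newt f}" by (rule finite_polytope_faces)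
  then show ?thesis by (rule finite_subset[rotated]) (auto simp: lower_edges_def)
qed

definition edge_right :: "complex poly poly \<Rightarrow> (real \<times> real) set \<Rightarrow> nat" where
  "edge_right f e = Max (fst ` edge_supp f e)"

lemma finite_edge_supp: "finite (edge_supp f e)"
  by (rule finite_subset[OF _ finite_supp2[of f]]) (auto simp: edge_supp_def)

lemma edge_supp_fst_bounds:
  "(i, j) \<in> edge_supp f e \<Longrightarrow> edge_left f e \<le> i \<and> i \<le> edge_right f e"
  unfolding edge_left_def edge_right_def using finite_edge_supp by (force intro: Min_le Max_ge)

lemma edge_supp_ends:
  assumes "edge_supp f e \<noteq> {}"
  obtains j j' where "(edge_left f e, j) \<in> edge_supp f e" "(edge_right f e, j') \<in> edge_supp f e"
proof -
  have "edge_left f e \<in> fst ` edge_supp f e" "edge_right f e \<in> fst ` edge_supp f e"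
    unfolding edge_left_def edge_right_def using finite_edge_supp assms by (auto intro: Min_in Max_in)
  then show thesis using that by force
qed

lemma lower_edge_line_edge_supp_ne:
  assumes "lower_edge_line f e m c"
  obtains i1 j1 i2 j2 where "(i1, j1) \<in> edge_supp f e" "(i2, j2) \<in> edge_supp f e" "i1 < i2"
  using assms unfolding edge_supp_lower_edge_line[OF assms] unfolding lower_edge_line_def by blast

lemma edge_left_less_edge_right:
  assumes "lower_edge_line f e m c"
  shows "edge_left f e < edge_right f e"
proof -
  obtain i1 j1 i2 j2 where "(i1, j1) \<in> edge_supp f e" "(i2, j2) \<in> edge_supp f e" "i1 < i2"
    by (rule lower_edge_line_edge_supp_ne[OF assms])
  then show ?thesis using edge_supp_fst_bounds[of i1 j1 f e] edge_supp_fst_bounds[of i2 j2 f e]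
    by linarith
qed

definition chord :: "real \<Rightarrow> real \<Rightarrow> real \<Rightarrow> real \<Rightarrow> real \<Rightarrow> real" where
  "chord u y1 v y2 t = y1 + (y2 - y1) * (t - u) / (v - u)"

lemma chord_on_line:
  assumes "u < v" "y1 = m * u + c" "y2 = m * v + c"
  shows "chord u y1 v y2 t = m * t + c"
  using assms unfolding chord_def by (simp add: field_simps)

lemma chord_below_line:
  fixes u v t y1 y2 m c :: real
  assumes "u < t" "t < v" "y1 \<le> m * u + c" "y2 \<le> m * v + c" "y1 < m * u + c \<or> y2 < m * v + c"
  shows "chord u y1 v y2 t < m * t + c"
proof -
  have vu: "v - u > 0" using assms by simp
  have "y1 * (v - t) \<le> (m * u + c) * (v - t)" "y2 * (t - u) \<le> (m * v + c) * (t - u)"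
    using assms by (intro mult_right_mono; simp)+
  moreover have "y1 * (v - t) < (m * u + c) * (v - t) \<or> y2 * (t - u) < (m * v + c) * (t - u)"
    using assms by (auto intro: mult_strict_right_mono)
  ultimately have "y1 * (v - t) + y2 * (t - u) < (m * u + c) * (v - t) + (m * v + c) * (t - u)"
    by linarith
  moreover have "chord u y1 v y2 t = (y1 * (v - t) + y2 * (t - u)) / (v - u)"
    "m * t + c = ((m * u + c) * (v - t) + (m * v + c) * (t - u)) / (v - u)"
    using vu unfolding chord_def by (simp_all add: field_simps)
  ultimately show ?thesis using vu by (simp add: divide_strict_right_mono)
qed

text \<open>The lower boundary of the Newton polygon at a non-integral abscissa \<open>t\<close> is the least chord
  between support points on either side of \<open>t\<close>; the line of a least chord supports the polygon.\<close>

lemma least_chord_supports: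
  assumes t: "\<And>i::nat. real i \<noteq> t"
    and s1: "(a1, b1) \<in> supp2 f" and s2: "(a2, b2) \<in> supp2 f" and a: "real a1 < t" "t < real a2"
    and line: "real b1 = m * real a1 + c" "real b2 = m * real a2 + c"
    and least: "\<And>i1 j1 i2 j2. (i1, j1) \<in> supp2 f \<Longrightarrow> (i2, j2) \<in> supp2 f \<Longrightarrow>
                  real i1 < t \<Longrightarrow> t < real i2 \<Longrightarrow> m * t + c \<le> chord i1 j1 i2 j2 t"
    and ij: "(i, j) \<in> supp2 f"
  shows "m * real i + c \<le> real j"
proof (rule ccontr)
  assume "\<not> ?thesis"
  then have below: "real j < m * real i + c" by simp
  consider "real i < t" | "t < real i" using t[of i] by linarith
  then show False
  proof cases
    case 1
    then have "chord i j a2 b2 t < m * t + c"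
      using chord_below_line[of i t a2 j m c b2] a below line by auto
    then show False using least[OF ij s2 1 a(2)] by simp
  next
    case 2
    then have "chord a1 b1 i j t < m * t + c"
      using chord_below_line[of a1 t i b1 m c j] a below line by auto
    then show False using least[OF s1 ij a(1) 2] by simp
  qed
qed

lemma lower_edge_covering:
  assumes p0: "(i0, j0) \<in> supp2 f" and p1: "(i1, j1) \<in> supp2 f" and k: "i0 \<le> k" "k < i1"
  obtains e where "e \<in> lower_edges f" "edge_left f e \<le> k" "k < edge_right f e"
proof -
  define t where "t = real k + 1 / 2"
  have t: "real i \<noteq> t" for i :: nat
  proof (cases "i \<le> k")
    case False
    then have "real k + 1 \<le> real i" by linarith
    then show ?thesis unfolding t_def by linarith
  qed (simp add: t_def)
  define Q where "Q = {(p, q). p \<in> supp2 f \<and> q \<in> supp2 f \<and> fst p \<le> k \<and> k < fst q}"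
  define val :: "(nat \<times> nat) \<times> (nat \<times> nat) \<Rightarrow> real"
    where "val = (\<lambda>((i1, j1), (i2, j2)). chord i1 j1 i2 j2 t)"
  have "finite Q" unfolding Q_def
    by (rule finite_subset[of _ "supp2 f \<times> supp2 f"]) (auto simp: finite_supp2)
  moreover have "((i0, j0), (i1, j1)) \<in> Q" unfolding Q_def using assms by auto
  ultimately have "arg_min_on val Q \<in> Q" "\<And>pq. pq \<in> Q \<Longrightarrow> val (arg_min_on val Q) \<le> val pq"
    using arg_min_if_finite[of Q val] by (auto simp: not_less)
  moreover obtain a1 b1 a2 b2 where pq: "arg_min_on val Q = ((a1, b1), (a2, b2))"
    by (metis prod.exhaust)
  ultimately have s: "(a1, b1) \<in> supp2 f" "(a2, b2) \<in> supp2 f" "a1 \<le> k" "k < a2"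
    and least_pair: "\<And>pq. pq \<in> Q \<Longrightarrow> chord a1 b1 a2 b2 t \<le> val pq"
    unfolding Q_def val_def by auto
  have a: "real a1 < t" "t < real a2" using s unfolding t_def by linarith+
  define m where "m = (real b2 - real b1) / (real a2 - real a1)"
  define c where "c = real b1 - m * real a1"
  have "real a2 - real a1 \<noteq> 0" using a by simp
  then have "m * (real a2 - real a1) = real b2 - real b1" unfolding m_def by simp
  then have line: "real b1 = m * real a1 + c" "real b2 = m * real a2 + c"
    unfolding c_def by (simp_all add: algebra_simps)
  have least: "m * t + c \<le> chord i1 j1 i2 j2 t"
    if "(i1, j1) \<in> supp2 f" "(i2, j2) \<in> supp2 f" "real i1 < t" "t < real i2" for i1 j1 i2 j2
  proof -
    have "i1 \<le> k" "k < i2" using that unfolding t_def by linarith+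
    then have "chord a1 b1 a2 b2 t \<le> chord i1 j1 i2 j2 t"
      using least_pair[of "((i1, j1), (i2, j2))"] that unfolding Q_def val_def by auto
    then show ?thesis using chord_on_line[OF _ line] a by simp
  qed
  have above: "\<forall>i j. (i, j) \<in> supp2 f \<longrightarrow> m * real i + c \<le> real j"
    using least_chord_supports[OF t s(1,2) a line least] by blast
  define e where "e = newt f \<inter> {p. snd p = m * fst p + c}"
  have edge: "lower_edge_line f e m c"
    unfolding lower_edge_line_def e_def using above s(1,2) line s(3,4) by fastforce
  have "(a1, b1) \<in> edge_supp f e" "(a2, b2) \<in> edge_supp f e"
    using edge_supp_lower_edge_line[OF edge] s line by auto
  then have "edge_left f e \<le> a1" "a2 \<le> edge_right f e" using edge_supp_fst_bounds by blast+
  then show thesis using that lower_edge_line_in_lower_edges[OF edge] s by simp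
qed

lemma lower_edge_line_endpoints:
  assumes "lower_edge_line f e m c"
  obtains u v where "(edge_left f e, u) \<in> supp2 f" "real u = m * real (edge_left f e) + c"
    "(edge_right f e, v) \<in> supp2 f" "real v = m * real (edge_right f e) + c"
proof -
  obtain i1 j1 i2 j2 where "(i1, j1) \<in> edge_supp f e"
    by (rule lower_edge_line_edge_supp_ne[OF assms])
  then obtain u v where "(edge_left f e, u) \<in> edge_supp f e" "(edge_right f e, v) \<in> edge_supp f e"
    using edge_supp_ends by blast
  then show thesis using that edge_supp_lower_edge_line[OF assms] by auto
qed

lemma lower_edge_line_diff_nonneg:
  assumes e1: "lower_edge_line f e1 m1 c1" and e2: "lower_edge_line f e2 m2 c2"
  shows "0 \<le> (m1 - m2) * real (edge_left f e1) + (c1 - c2)"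
    and "0 \<le> (m1 - m2) * real (edge_right f e1) + (c1 - c2)"
proof -
  have below: "\<And>i j. (i, j) \<in> supp2 f \<Longrightarrow> m2 * real i + c2 \<le> real j"
    using e2 unfolding lower_edge_line_def by blast
  obtain u v where u: "(edge_left f e1, u) \<in> supp2 f" "real u = m1 * real (edge_left f e1) + c1"
    and v: "(edge_right f e1, v) \<in> supp2 f" "real v = m1 * real (edge_right f e1) + c1"
    by (rule lower_edge_line_endpoints[OF e1])
  show "0 \<le> (m1 - m2) * real (edge_left f e1) + (c1 - c2)"
    using below[OF u(1)] u(2) by (simp add: algebra_simps)
  show "0 \<le> (m1 - m2) * real (edge_right f e1) + (c1 - c2)"
    using below[OF v(1)] v(2) by (simp add: algebra_simps)
qed

lemma affine_nonneg_between:
  fixes u v t a b :: real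
  assumes "u < t" "t < v" "0 \<le> a * u + b" "0 \<le> a * v + b"
  shows "0 \<le> a * t + b"
proof (cases "a \<ge> 0")
  case True
  then have "a * u \<le> a * t" using assms by (intro mult_left_mono) auto
  then show ?thesis using assms by linarith
next
  case False
  then have "a * v \<le> a * t" using assms by (intro mult_left_mono_neg) auto
  then show ?thesis using assms by linarith
qed

lemma affine_zero_between:
  fixes u v t a b :: real
  assumes "u < t" "t < v" "0 \<le> a * u + b" "0 \<le> a * v + b" "a * t + b = 0"
  shows "a = 0"
proof (rule ccontr)
  assume "a \<noteq> 0"
  then consider "a > 0" | "a < 0" by linarith
  then show False
  proof cases
    case 1
    then have "a * u < a * t" using assms(1) by simp
    then show False using assms by linarith
  next
    case 2
    then have "a * v < a * t" using assms(2) by simp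
    then show False using assms by linarith
  qed
qed

lemma lower_edge_covering_unique:
  assumes e1: "e1 \<in> lower_edges f" and e2: "e2 \<in> lower_edges f"
    and k1: "edge_left f e1 \<le> k" "k < edge_right f e1"
    and k2: "edge_left f e2 \<le> k" "k < edge_right f e2"
  shows "e1 = e2"
proof -
  obtain m1 c1 where L1: "lower_edge_line f e1 m1 c1" using lower_edge_obtain_line[OF e1] .
  obtain m2 c2 where L2: "lower_edge_line f e2 m2 c2" using lower_edge_obtain_line[OF e2] .
  define t where "t = real k + 1 / 2"
  have t1: "real (edge_left f e1) < t" "t < real (edge_right f e1)"
    and t2: "real (edge_left f e2) < t" "t < real (edge_right f e2)"
    using k1 k2 unfolding t_def by linarith+
  note d1 = lower_edge_line_diff_nonneg[OF L1 L2] and d2 = lower_edge_line_diff_nonneg[OF L2 L1]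
  have "0 \<le> (m1 - m2) * t + (c1 - c2)" by (rule affine_nonneg_between[OF t1 d1])
  moreover have "0 \<le> (m2 - m1) * t + (c2 - c1)" by (rule affine_nonneg_between[OF t2 d2])
  ultimately have "(m1 - m2) * t + (c1 - c2) = 0" by (simp add: algebra_simps)
  then have "m1 - m2 = 0" by (rule affine_zero_between[OF t1 d1])
  then show ?thesis using lower_edge_line_same_slope L1 L2 by simp
qed

lemma lower_edge_spans:
  assumes "f \<noteq> 0"
  shows "(\<Union>e\<in>lower_edges f. {edge_left f e..<edge_right f e}) = {Min (fst ` supp2 f)..<degree f}"
proof (intro equalityI subsetI)
  have fin: "finite (fst ` supp2 f)" using finite_supp2 by auto
  fix k
  assume "k \<in> (\<Union>e\<in>lower_edges f. {edge_left f e..<edge_right f e})"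
  then obtain e where e: "e \<in> lower_edges f" "edge_left f e \<le> k" "k < edge_right f e" by auto
  obtain m c where "lower_edge_line f e m c" by (rule lower_edge_obtain_line[OF e(1)])
  then obtain u v where "(edge_left f e, u) \<in> supp2 f" "(edge_right f e, v) \<in> supp2 f"
    by (rule lower_edge_line_endpoints)
  then have "Min (fst ` supp2 f) \<le> edge_left f e" "edge_right f e \<le> degree f"
    using Min_le[OF fin] supp2_fst_le_degree by force+
  then show "k \<in> {Min (fst ` supp2 f)..<degree f}" using e by auto
next
  have fin: "finite (fst ` supp2 f)" using finite_supp2 by auto
  fix k assume k: "k \<in> {Min (fst ` supp2 f)..<degree f}"
  have top: "(degree f, degree (lead_coeff f)) \<in> supp2 f" using assms by (simp add: supp2_def)
  then have "fst ` supp2 f \<noteq> {}" by blast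
  then obtain j0 where "(Min (fst ` supp2 f), j0) \<in> supp2 f" using Min_in[OF fin] by force
  then obtain e where "e \<in> lower_edges f" "edge_left f e \<le> k" "k < edge_right f e"
    using lower_edge_covering[OF _ top] k by (metis atLeastLessThan_iff)
  then show "k \<in> (\<Union>e\<in>lower_edges f. {edge_left f e..<edge_right f e})" by auto
qed

lemma sum_lower_edge_widths:
  assumes "f \<noteq> 0"
  shows "(\<Sum>e\<in>lower_edges f. edge_right f e - edge_left f e) = degree f - Min (fst ` supp2 f)"
proof -
  have "{edge_left f e..<edge_right f e} \<inter> {edge_left f e'..<edge_right f e'} = {}"
    if "e \<in> lower_edges f" "e' \<in> lower_edges f" "e \<noteq> e'" for e e'
  proof -
    have "k \<notin> {edge_left f e'..<edge_right f e'}" if "k \<in> {edge_left f e..<edge_right f e}" for k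
      using lower_edge_covering_unique[OF \<open>e \<in> lower_edges f\<close> \<open>e' \<in> lower_edges f\<close>]
        \<open>e \<noteq> e'\<close> that by auto
    then show ?thesis by blast
  qed
  then have "(\<Sum>e\<in>lower_edges f. edge_right f e - edge_left f e)
        = card (\<Union>e\<in>lower_edges f. {edge_left f e..<edge_right f e})"
    by (subst card_UN_disjoint) (use finite_lower_edges in auto)
  then show ?thesis using lower_edge_spans[OF assms] by simp
qed

section \<open>Specialising \<open>y\<close>\<close>

lemma coeff_eval_y: "coeff (eval_y p c) n = poly (coeff p n) c"
  unfolding eval_y_def by (simp add: coeff_map_poly)

lemma poly_eval_y: "poly (eval_y p c) x = poly (poly p [:x:]) c"
  by (induction p) (simp_all add: eval_y_def map_poly_pCons)

lemma eval_y_mult: "eval_y (p * q) c = eval_y p c * eval_y q c"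
  by (rule poly_eq_poly_eq_iff[THEN iffD1], rule ext) (simp add: poly_eval_y)

lemma eval_y_1: "eval_y 1 c = 1"
  by (simp add: eval_y_def)

lemma eval_y_prod: "eval_y (\<Prod>e\<in>A. p e) c = (\<Prod>e\<in>A. eval_y (p e) c)"
  by (induction A rule: infinite_finite_induct) (simp_all add: eval_y_mult eval_y_1)

lemma eval_y_eq_0_imp_poly_lead_coeff_eq_0:
  assumes "eval_y f c = 0"
  shows "poly (lead_coeff f) c = 0"
  using arg_cong[OF assms, of "\<lambda>p. coeff p (degree f)"] by (simp add: coeff_eval_y)

lemma poly_eval_y_supp2:
  "poly (eval_y f c) x = (\<Sum>(i, j)\<in>supp2 f. coeff (coeff f i) j * c ^ j * x ^ i)"
proof -
  define T where "T = Sigma {..degree f} (\<lambda>i. {..degree (coeff f i)})"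
  have "poly (eval_y f c) x = (\<Sum>i\<le>degree f. poly (coeff f i) c * x ^ i)"
    unfolding poly_eval_y by (subst poly_altdef) (simp add: poly_sum poly_power)
  also have "\<dots> = (\<Sum>(i, j)\<in>T. coeff (coeff f i) j * c ^ j * x ^ i)"
    unfolding T_def by (subst sum.Sigma[symmetric]) (auto simp: poly_altdef sum_distrib_right)
  also have "\<dots> = (\<Sum>(i, j)\<in>supp2 f. coeff (coeff f i) j * c ^ j * x ^ i)"
  proof (rule sum.mono_neutral_right)
    show "supp2 f \<subseteq> T"
      unfolding T_def supp2_def using supp2_fst_le_degree by (auto simp: supp2_def le_degree)
  qed (auto simp: T_def supp2_def)
  finally show ?thesis .
qed

lemma coeff_eval_y_edge_star:
  "coeff (eval_y (edge_star f e) c) t =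
     (\<Sum>(i, j)\<in>edge_supp f e. if i - edge_left f e = t then coeff (coeff f i) j * c ^ j else 0)"
  unfolding coeff_eval_y edge_star_def coeff_sum poly_sum
  by (intro sum.cong refl) (auto simp: poly_monom coeff_monom)

lemma poly_eval_y_edge_star:
  "x ^ edge_left f e * poly (eval_y (edge_star f e) c) x =
     (\<Sum>(i, j)\<in>edge_supp f e. coeff (coeff f i) j * c ^ j * x ^ i)"
proof -
  have "x ^ edge_left f e * x ^ (i - edge_left f e) = x ^ i" if "(i, j) \<in> edge_supp f e" for i j
    using edge_supp_fst_bounds[OF that] by (simp flip: power_add)
  then show ?thesis
    unfolding poly_eval_y edge_star_def poly_sum sum_distrib_left
    by (intro sum.cong refl) (auto simp: poly_monom mult_ac)
qed

lemma coeff_eval_y_edge_star_on_line: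
  assumes edge: "lower_edge_line f e m c" and ij: "(edge_left f e + t, j) \<in> edge_supp f e"
  shows "coeff (eval_y (edge_star f e) w) t = coeff (coeff f (edge_left f e + t)) j * w ^ j"
proof -
  let ?a = "edge_left f e"
  have iff: "(fst p - ?a = t) \<longleftrightarrow> p = (?a + t, j)" if "p \<in> edge_supp f e" for p
  proof -
    have "?a \<le> fst p" using edge_supp_fst_bounds[of "fst p" "snd p" f e] that by simp
    then show ?thesis using that ij unfolding edge_supp_lower_edge_line[OF edge] by (cases p) auto
  qed
  have "coeff (eval_y (edge_star f e) w) t =
      (\<Sum>p\<in>edge_supp f e. if p = (?a + t, j) then coeff (coeff f (fst p)) (snd p) * w ^ snd p else 0)"
    unfolding coeff_eval_y_edge_star by (intro sum.cong refl) (simp add: case_prod_unfold iff)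
  also have "\<dots> = coeff (coeff f (?a + t)) j * w ^ j" using ij finite_edge_supp by simp
  finally show ?thesis .
qed

lemma eval_y_edge_star_shape:
  assumes edge: "lower_edge_line f e m c" and w: "w \<noteq> 0"
  shows "poly (eval_y (edge_star f e) w) 0 \<noteq> 0"
    and "degree (eval_y (edge_star f e) w) = edge_right f e - edge_left f e"
proof -
  let ?h = "eval_y (edge_star f e) w" and ?a = "edge_left f e" and ?b = "edge_right f e"
  have nonzero: "coeff ?h t \<noteq> 0" if "(?a + t, j) \<in> edge_supp f e" for t j
    using coeff_eval_y_edge_star_on_line[OF edge that] that w by (simp add: edge_supp_def supp2_def)
  obtain i1 j1 where "(i1, j1) \<in> edge_supp f e" by (rule lower_edge_line_edge_supp_ne[OF edge])
  then obtain u v where u: "(?a, u) \<in> edge_supp f e" and v: "(?b, v) \<in> edge_supp f e"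
    using edge_supp_ends by blast
  show "poly ?h 0 \<noteq> 0" using nonzero[of 0] u by (simp add: poly_0_coeff_0)
  have "coeff ?h t = 0" if "t > ?b - ?a" for t
    unfolding coeff_eval_y_edge_star using that edge_supp_fst_bounds
    by (intro sum.neutral) fastforce
  then have "degree ?h \<le> ?b - ?a" by (intro degree_le) auto
  moreover have "?b - ?a \<le> degree ?h"
    using nonzero[of "?b - ?a" v] v edge_left_less_edge_right[OF edge] by (simp add: le_degree)
  ultimately show "degree ?h = ?b - ?a" by simp
qed

lemma size_nonzero_proots_eval_y:
  assumes g: "eval_y f c \<noteq> 0"
  shows "size {#z \<in># proots (eval_y f c). z \<noteq> 0#} \<le> degree f - Min (fst ` supp2 f)"
proof -
  let ?g = "eval_y f c" and ?imin = "Min (fst ` supp2 f)"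
  have "coeff ?g k = 0" if "k < ?imin" for k
  proof (cases "coeff f k = 0")
    case False
    then have "(k, degree (coeff f k)) \<in> supp2 f" by (simp add: supp2_def)
    then have "?imin \<le> k" using finite_supp2 by (force intro: Min_le)
    then show ?thesis using that by simp
  qed (simp add: coeff_eval_y)
  then have "?imin \<le> order 0 ?g"
    using monom_1_dvd_iff[OF g] monom_1_dvd_iff' by blast
  moreover have "size {#z \<in># proots ?g. z \<noteq> 0#} + count (proots ?g) 0 = degree ?g"
    using multiset_partition[of "proots ?g" "\<lambda>z. z \<noteq> 0"]
    by (metis count_conv_size_mset size_proots_complex size_union)
  moreover have "degree ?g \<le> degree f" unfolding eval_y_def by (rule map_poly_degree_leq)
  ultimately show ?thesis using g by simp
qed

section \<open>Counting roots in a disc\<close>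

lemma size_filter_proots:
  assumes "p \<noteq> 0"
  shows "size {#x \<in># proots p. P x#} = (\<Sum>x | poly p x = 0 \<and> P x. order x p)"
proof -
  have "size {#x \<in># proots p. P x#}
        = (\<Sum>x\<in>set_mset {#x \<in># proots p. P x#}. count {#x \<in># proots p. P x#} x)"
    by (rule size_multiset_overloaded_eq)
  also have "set_mset {#x \<in># proots p. P x#} = {x. poly p x = 0 \<and> P x}" using assms by auto
  finally show ?thesis using assms by simp
qed

lemma size_filter_proots_single_root:
  assumes "p \<noteq> 0" "P z" "\<And>x. poly p x = 0 \<Longrightarrow> P x \<Longrightarrow> x = z"
  shows "size {#x \<in># proots p. P x#} = order z p"
proof (cases "poly p z = 0")
  case True
  then have single: "{x. poly p x = 0 \<and> P x} = {z}" using assms(2,3) by blast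
  show ?thesis unfolding size_filter_proots[OF assms(1)] single by simp
next
  case False
  then have none: "{x. poly p x = 0 \<and> P x} = {}" using assms(3) by blast
  show ?thesis unfolding size_filter_proots[OF assms(1)] none using False by (simp add: order_0I)
qed

lemma zorder_poly:
  assumes "p \<noteq> 0"
  shows "zorder (poly p) z = int (order z p)"
proof -
  obtain q where q: "p = [:- z, 1:] ^ order z p * q" "\<not> [:- z, 1:] dvd q"
    using order_decomp[OF assms] by blast
  show ?thesis
  proof (rule zorder_eqI[of UNIV z "poly q"])
    show "poly q z \<noteq> 0" using q(2) by (simp add: poly_eq_0_iff_dvd)
    show "poly q holomorphic_on UNIV" by (intro holomorphic_intros)
    fix w
    have "poly p w = (w - z) ^ order z p * poly q w" by (subst q(1)) (simp add: poly_power)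
    then show "poly p w = poly q w * (w - z) powi int (order z p)" by simp
  qed auto
qed

lemma order_pcompose_scale:
  fixes p :: "complex poly"
  assumes "p \<noteq> 0" "c \<noteq> 0"
  shows "order x (p \<circ>\<^sub>p [:0, c:]) = order (c * x) p"
proof -
  have "p \<circ>\<^sub>p [:0, c:] \<noteq> 0" using assms by (simp add: pcompose_eq_0_iff)
  then have "int (order x (p \<circ>\<^sub>p [:0, c:])) = zorder (poly (p \<circ>\<^sub>p [:0, c:])) x"
    by (rule zorder_poly[symmetric])
  also have "poly (p \<circ>\<^sub>p [:0, c:]) = (\<lambda>w. poly p (c * w))"
    by (auto simp: poly_pcompose mult.commute)
  also have "zorder (\<lambda>w. poly p (c * w)) x = zorder (poly p) (c * x)"
  proof (rule zorder_scale[OF _ assms(2)])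
    have "poly p analytic_on UNIV" by (simp add: analytic_on_open holomorphic_intros)
    then show "poly p meromorphic_on {c * x}"
      using analytic_on_imp_meromorphic_on analytic_on_subset by blast
  qed
  also have "\<dots> = int (order (c * x) p)" by (rule zorder_poly[OF assms(1)])
  finally show ?thesis by simp
qed

lemma winding_sum_proots:
  fixes p :: "complex poly"
  assumes "p \<noteq> 0" "\<delta> > 0" "\<And>z. dist z0 z = \<delta> \<Longrightarrow> poly p z \<noteq> 0"
  shows "(\<Sum>x | x \<in> UNIV \<and> poly p x = 0. winding_number (circlepath z0 \<delta>) x * of_int (zorder (poly p) x))
         = of_nat (size {#x \<in># proots p. x \<in> ball z0 \<delta>#})"
proof -
  have "winding_number (circlepath z0 \<delta>) x * of_int (zorder (poly p) x)
        = (if x \<in> ball z0 \<delta> then of_nat (order x p) else 0)" if "poly p x = 0" for x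
  proof -
    have "dist z0 x \<noteq> \<delta>" using assms(3) that by blast
    then consider "dist z0 x < \<delta>" | "dist z0 x > \<delta>" by linarith
    then show ?thesis
    proof cases
      case 1
      then have "winding_number (circlepath z0 \<delta>) x = 1"
        by (intro winding_number_circlepath) (simp add: dist_norm norm_minus_commute)
      then show ?thesis using 1 by (simp add: zorder_poly[OF assms(1)])
    next
      case 2
      have "winding_number (circlepath z0 \<delta>) x = 0"
      proof (rule winding_number_zero_outside)
        show "x \<notin> cball z0 \<delta>" "path_image (circlepath z0 \<delta>) \<subseteq> cball z0 \<delta>"
          using 2 assms(2) by auto
      qed auto
      then show ?thesis using 2 by simp
    qed
  qed
  then have "(\<Sum>x | x \<in> UNIV \<and> poly p x = 0. winding_number (circlepath z0 \<delta>) x * of_int (zorder (poly p) x))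
        = (\<Sum>x | poly p x = 0. if x \<in> ball z0 \<delta> then of_nat (order x p) else 0)"
    by (intro sum.cong) auto
  also have "\<dots> = (\<Sum>x\<in>{x \<in> {x. poly p x = 0}. x \<in> ball z0 \<delta>}. of_nat (order x p))"
    by (rule sum.inter_filter[OF poly_roots_finite[OF assms(1)], symmetric])
  also have "\<dots> = of_nat (size {#x \<in># proots p. x \<in> ball z0 \<delta>#})"
    unfolding size_filter_proots[OF assms(1)] of_nat_sum by simp
  finally show ?thesis .
qed

lemma Rouche_poly_ball:
  fixes P Q :: "complex poly"
  assumes P: "P \<noteq> 0" and Q: "Q \<noteq> 0" and \<delta>: "\<delta> > 0"
    and dominated: "\<And>z. dist z0 z = \<delta> \<Longrightarrow> cmod (poly Q z - poly P z) < cmod (poly P z)"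
  shows "size {#x \<in># proots Q. x \<in> ball z0 \<delta>#} = size {#x \<in># proots P. x \<in> ball z0 \<delta>#}"
proof -
  let ?\<gamma> = "circlepath z0 \<delta>"
  have no_roots: "poly P z \<noteq> 0" "poly Q z \<noteq> 0" if "dist z0 z = \<delta>" for z
    using dominated[OF that] by auto
  have "(\<Sum>x | x \<in> UNIV \<and> poly P x + (poly Q x - poly P x) = 0.
            winding_number ?\<gamma> x * of_int (zorder (\<lambda>x. poly P x + (poly Q x - poly P x)) x))
      = (\<Sum>x | x \<in> UNIV \<and> poly P x = 0. winding_number ?\<gamma> x * of_int (zorder (poly P) x))"
  proof (rule Rouche_theorem)
    show "finite {x. x \<in> UNIV \<and> poly P x + (poly Q x - poly P x) = 0}"
      using poly_roots_finite[OF Q] by simp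
    show "finite {x \<in> UNIV. poly P x = 0}" using poly_roots_finite[OF P] by simp
    show "poly P holomorphic_on UNIV" "(\<lambda>x. poly Q x - poly P x) holomorphic_on UNIV"
      by (intro holomorphic_intros)+
    show "\<forall>z\<in>path_image ?\<gamma>. cmod (poly Q z - poly P z) < cmod (poly P z)"
      using \<delta> dominated by (simp add: dist_norm)
  qed auto
  moreover have "(\<lambda>x. poly P x + (poly Q x - poly P x)) = poly Q" by auto
  ultimately have "(\<Sum>x | x \<in> UNIV \<and> poly Q x = 0. winding_number ?\<gamma> x * of_int (zorder (poly Q) x))
      = (\<Sum>x | x \<in> UNIV \<and> poly P x = 0. winding_number ?\<gamma> x * of_int (zorder (poly P) x))"
    by simp
  then have "of_nat (size {#x \<in># proots Q. x \<in> ball z0 \<delta>#})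
             = (of_nat (size {#x \<in># proots P. x \<in> ball z0 \<delta>#}) :: complex)"
    using winding_sum_proots[OF P \<delta> no_roots(1)] winding_sum_proots[OF Q \<delta> no_roots(2)] by simp
  then show ?thesis by (simp only: of_nat_eq_iff)
qed

lemma dist_of_real_mult:
  fixes \<rho> :: real and z u :: complex
  assumes "\<rho> > 0"
  shows "dist (of_real \<rho> * z) (of_real \<rho> * u) = \<rho> * dist z u"
proof -
  have "of_real \<rho> * z - of_real \<rho> * u = of_real \<rho> * (z - u)" by (simp add: algebra_simps)
  then show ?thesis using assms by (simp add: dist_norm norm_mult)
qed

lemma size_proots_scaled_ball:
  fixes H :: "complex poly" and \<rho> \<delta> :: real
  assumes H: "H \<noteq> 0" and \<rho>: "\<rho> > 0" and lam: "lam \<noteq> 0" and \<delta>: "\<delta> > 0"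
    and iso: "\<And>u. dist z u < \<delta> \<Longrightarrow> poly H u = 0 \<Longrightarrow> u = z"
  shows "size {#x \<in># proots (smult lam (H \<circ>\<^sub>p [:0, of_real (1 / \<rho>):])). x \<in> ball (of_real \<rho> * z) (\<rho> * \<delta>)#}
         = order z H"
proof -
  let ?P = "smult lam (H \<circ>\<^sub>p [:0, of_real (1 / \<rho>):])"
  have P: "?P \<noteq> 0" using H \<rho> lam by (simp add: pcompose_eq_0_iff)
  have "size {#x \<in># proots ?P. x \<in> ball (of_real \<rho> * z) (\<rho> * \<delta>)#} = order (of_real \<rho> * z) ?P"
  proof (rule size_filter_proots_single_root[OF P])
    show "of_real \<rho> * z \<in> ball (of_real \<rho> * z) (\<rho> * \<delta>)" using \<rho> \<delta> by simp
    fix x assume x: "poly ?P x = 0" "x \<in> ball (of_real \<rho> * z) (\<rho> * \<delta>)"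
    define u where "u = x / of_real \<rho>"
    have xu: "x = of_real \<rho> * u" unfolding u_def using \<rho> by simp
    have "poly H u = 0" "dist z u < \<delta>"
      using x \<rho> lam unfolding xu by (auto simp: poly_pcompose dist_of_real_mult[OF \<rho>])
    then show "x = of_real \<rho> * z" using iso xu by simp
  qed
  also have "\<dots> = order z H" using H \<rho> lam by (simp add: order_smult order_pcompose_scale)
  finally show ?thesis .
qed

lemma B_eq_arc_discrepancy:
  assumes "g \<noteq> 0"
  shows "B g = arc_discrepancy {#z \<in># proots g. z \<noteq> 0#}"
proof -
  have "N_ang a b g = arc_count a b {#z \<in># proots g. z \<noteq> 0#}" for a b
    unfolding N_ang_def arc_count_def nz_roots_def filter_filter_mset
    using size_filter_proots[OF assms] by (simp add: conj_ac)
  moreover have "n_nz g = size {#z \<in># proots g. z \<noteq> 0#}"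
    unfolding n_nz_def nz_roots_def using size_filter_proots[OF assms] by (simp add: conj_ac)
  ultimately show ?thesis
    unfolding B_def arc_discrepancy_def arc_deviation_def by simp
qed

section \<open>Root clusters of \<open>f(x, r w)\<close> for small \<open>r\<close>\<close>

lemma eventually_poly_nonzero_at_right:
  fixes q :: "complex poly"
  assumes "q \<noteq> 0" "w \<noteq> 0"
  shows "eventually (\<lambda>r. poly q (of_real r * w) \<noteq> 0) (at_right 0)"
proof -
  define F where "F = {r::real. poly q (of_real r * w) = 0}"
  have "inj_on (\<lambda>r::real. of_real r * w) F" using assms(2) by (auto simp: inj_on_def)
  moreover have "(\<lambda>r::real. of_real r * w) ` F \<subseteq> {x. poly q x = 0}" unfolding F_def by auto
  ultimately have "finite F"
    using poly_roots_finite[OF assms(1)] by (metis finite_imageD finite_subset)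
  then have "open (- (F - {0}))" by (intro open_Compl finite_imp_closed) simp
  then have "eventually (\<lambda>r. r \<in> - (F - {0}) - {0}) (at (0::real))"
    by (rule eventually_at_in_open) simp
  then have "eventually (\<lambda>r. poly q (of_real r * w) \<noteq> 0) (at (0::real))"
    by (rule eventually_mono) (simp add: F_def)
  then show ?thesis by (rule filter_leD[OF at_within_le_at])
qed

lemma eventually_eval_y_nonzero:
  assumes "f \<noteq> 0" "w \<noteq> 0"
  shows "eventually (\<lambda>r. eval_y f (of_real r * w) \<noteq> 0) (at_right 0)"
  using eventually_poly_nonzero_at_right[of "lead_coeff f" w] assms eval_y_eq_0_imp_poly_lead_coeff_eq_0
  by (auto elim: eventually_mono)

lemma powr_scaling_exponent:
  fixes r m :: real
  assumes "r > 0"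
  shows "r ^ j * (r powr (- m)) ^ i = r powr (real j - m * real i)"
proof -
  have "r ^ j = r powr real j" using assms by (simp add: powr_realpow)
  moreover have "(r powr (- m)) ^ i = r powr (real i * (- m))" using assms by (simp add: powr_power)
  ultimately show ?thesis by (simp add: powr_add[symmetric] algebra_simps)
qed

text \<open>Under the substitution \<open>y = r w\<close>, \<open>x = r\<^sup>-\<^sup>m u\<close> every monomial \<open>a\<^sub>i\<^sub>j x\<^sup>i y\<^sup>j\<close> acquires the
  factor \<open>r\<^sup>j\<^sup>-\<^sup>m\<^sup>i\<close>; on the edge this is \<open>r\<^sup>c\<close>, off the edge it is of strictly higher order.\<close>

lemma poly_eval_y_edge_scaling:
  assumes edge: "lower_edge_line f e m c" and r: "r > 0"
  shows "poly (eval_y f (of_real r * w)) (of_real (r powr (- m)) * u) =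
         of_real (r powr c) * (u ^ edge_left f e * poly (eval_y (edge_star f e) w) u)
         + (\<Sum>(i, j)\<in>supp2 f - edge_supp f e.
              coeff (coeff f i) j * w ^ j * u ^ i * of_real (r powr (real j - m * real i)))"
proof -
  define t where "t = (\<lambda>(i, j). coeff (coeff f i) j * w ^ j * u ^ i * of_real (r powr (real j - m * real i)))"
  have "poly (eval_y f (of_real r * w)) (of_real (r powr (- m)) * u) = (\<Sum>ij\<in>supp2 f. t ij)"
    unfolding poly_eval_y_supp2 t_def
    by (intro sum.cong refl)
       (auto simp: power_mult_distrib powr_scaling_exponent[OF r, symmetric] mult_ac)
  also have "\<dots> = (\<Sum>ij\<in>supp2 f - edge_supp f e. t ij) + (\<Sum>ij\<in>edge_supp f e. t ij)"
    by (rule sum.subset_diff) (auto simp: edge_supp_def finite_supp2)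
  also have "(\<Sum>ij\<in>edge_supp f e. t ij)
      = of_real (r powr c) * (\<Sum>(i, j)\<in>edge_supp f e. coeff (coeff f i) j * w ^ j * u ^ i)"
    unfolding sum_distrib_left t_def
    by (intro sum.cong refl) (auto simp: edge_supp_lower_edge_line[OF edge] mult_ac)
  finally show ?thesis unfolding poly_eval_y_edge_star t_def by (simp add: add.commute)
qed

lemma off_edge_terms_small:
  assumes edge: "lower_edge_line f e m c" and \<eta>: "\<eta> > 0"
  shows "eventually (\<lambda>r. \<forall>u. cmod u \<le> K \<longrightarrow>
           cmod (\<Sum>(i, j)\<in>supp2 f - edge_supp f e.
              coeff (coeff f i) j * w ^ j * u ^ i * of_real (r powr (real j - m * real i)))
           < r powr c * \<eta>) (at_right 0)"
proof -
  define T where "T = supp2 f - edge_supp f e"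
  define \<Phi> where "\<Phi> = (\<lambda>r. \<Sum>(i, j)\<in>T. cmod (coeff (coeff f i) j * w ^ j) * K ^ i
                                    * r powr (real j - m * real i - c))"
  have gap: "c < real j - m * real i" if "(i, j) \<in> T" for i j
  proof -
    have "(i, j) \<in> supp2 f" "real j \<noteq> m * real i + c"
      using that unfolding T_def edge_supp_lower_edge_line[OF edge] by auto
    moreover have "m * real i + c \<le> real j" using edge calculation(1) unfolding lower_edge_line_def by blast
    ultimately show ?thesis by linarith
  qed
  have "(\<Phi> \<longlongrightarrow> 0) (at_right 0)"
    unfolding \<Phi>_def case_prod_unfold
    by (intro tendsto_null_sum tendsto_mult_right_zero tendsto_zero_powrI tendsto_ident_at)
       (auto simp: gap eventually_at_right_less[THEN eventually_mono])
  then have "eventually (\<lambda>r. \<Phi> r < \<eta> \<and> r > 0) (at_right 0)"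
    using \<eta> by (intro eventually_conj order_tendstoD(2) eventually_at_right_less) auto
  then show ?thesis
  proof (rule eventually_mono, intro allI impI)
    fix r u assume r: "\<Phi> r < \<eta> \<and> r > 0" and u: "cmod u \<le> K"
    have "cmod (\<Sum>(i, j)\<in>T. coeff (coeff f i) j * w ^ j * u ^ i * of_real (r powr (real j - m * real i)))
          \<le> (\<Sum>(i, j)\<in>T. r powr c * (cmod (coeff (coeff f i) j * w ^ j) * K ^ i
                                        * r powr (real j - m * real i - c)))"
      unfolding case_prod_unfold
    proof (rule order.trans[OF norm_sum sum_mono])
      fix ij assume "ij \<in> T"
      have "cmod u ^ fst ij \<le> K ^ fst ij" using u by (intro power_mono) auto
      moreover have "r powr (real (snd ij) - m * real (fst ij))
                     = r powr c * r powr (real (snd ij) - m * real (fst ij) - c)"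
        by (simp add: powr_add[symmetric])
      ultimately show "cmod (coeff (coeff f (fst ij)) (snd ij) * w ^ snd ij * u ^ fst ij
                             * of_real (r powr (real (snd ij) - m * real (fst ij))))
            \<le> r powr c * (cmod (coeff (coeff f (fst ij)) (snd ij) * w ^ snd ij) * K ^ fst ij
                          * r powr (real (snd ij) - m * real (fst ij) - c))"
        by (simp add: norm_mult norm_power mult_left_mono mult_right_mono mult_ac)
    qed
    also have "\<dots> = r powr c * \<Phi> r" unfolding \<Phi>_def sum_distrib_left by (simp add: case_prod_unfold)
    also have "\<dots> < r powr c * \<eta>" using r by simp
    finally show "cmod (\<Sum>(i, j)\<in>supp2 f - edge_supp f e.
              coeff (coeff f i) j * w ^ j * u ^ i * of_real (r powr (real j - m * real i)))
           < r powr c * \<eta>" unfolding T_def .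
  qed
qed

lemma poly_min_on_sphere:
  fixes H :: "complex poly"
  assumes "\<delta> > 0" "\<And>u. dist z u = \<delta> \<Longrightarrow> poly H u \<noteq> 0"
  obtains \<eta> where "\<eta> > 0" "\<And>u. dist z u = \<delta> \<Longrightarrow> \<eta> \<le> cmod (poly H u)"
proof -
  have "\<exists>u0\<in>sphere z \<delta>. \<forall>u\<in>sphere z \<delta>. cmod (poly H u0) \<le> cmod (poly H u)"
    by (rule continuous_attains_inf) (use assms(1) in \<open>auto intro!: continuous_intros\<close>)
  then obtain u0 where "u0 \<in> sphere z \<delta>" "\<And>u. u \<in> sphere z \<delta> \<Longrightarrow> cmod (poly H u0) \<le> cmod (poly H u)"
    by blast
  with assms(2) show thesis by (intro that[of "cmod (poly H u0)"]) auto
qed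

text \<open>The roots of \<open>f(x, r w)\<close> near \<open>r\<^sup>-\<^sup>m z\<close>, for a root \<open>z\<close> of the edge polynomial, are counted
  by Rouch\'e's theorem, comparing with the edge polynomial rescaled to the \<open>x\<close>-plane.\<close>

lemma eval_y_cluster_count_at:
  assumes edge: "lower_edge_line f e m c" and r: "r > 0" and Q: "eval_y f (of_real r * w) \<noteq> 0"
    and H: "H = monom 1 (edge_left f e) * eval_y (edge_star f e) w" "H \<noteq> 0"
    and \<delta>: "\<delta> > 0" and iso: "\<And>u. dist z u < \<delta> \<Longrightarrow> poly H u = 0 \<Longrightarrow> u = z"
    and \<eta>: "\<And>u. dist z u = \<delta> \<Longrightarrow> \<eta> \<le> cmod (poly H u)"
    and small: "\<And>u. cmod u \<le> cmod z + \<delta> \<Longrightarrow>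
           cmod (\<Sum>(i, j)\<in>supp2 f - edge_supp f e.
              coeff (coeff f i) j * w ^ j * u ^ i * of_real (r powr (real j - m * real i)))
           < r powr c * \<eta>"
  shows "size {#x \<in># proots (eval_y f (of_real r * w)). x \<in> ball (of_real (r powr - m) * z) (r powr - m * \<delta>)#}
         = order z H"
proof -
  define \<rho> where "\<rho> = r powr - m"
  have \<rho>: "\<rho> > 0" unfolding \<rho>_def using r by simp
  define P where "P = smult (of_real (r powr c)) (H \<circ>\<^sub>p [:0, of_real (1 / \<rho>):])"
  have P: "P \<noteq> 0" unfolding P_def using H \<rho> r by (simp add: pcompose_eq_0_iff)
  have poly_P: "poly P (of_real \<rho> * u) = of_real (r powr c) * poly H u" for u
    unfolding P_def using \<rho> by (simp add: poly_pcompose)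
  have "size {#x \<in># proots (eval_y f (of_real r * w)). x \<in> ball (of_real \<rho> * z) (\<rho> * \<delta>)#}
        = size {#x \<in># proots P. x \<in> ball (of_real \<rho> * z) (\<rho> * \<delta>)#}"
  proof (rule Rouche_poly_ball[OF P Q])
    show "\<rho> * \<delta> > 0" using \<rho> \<delta> by simp
    fix x assume x: "dist (of_real \<rho> * z) x = \<rho> * \<delta>"
    define u where "u = x / of_real \<rho>"
    have xu: "x = of_real \<rho> * u" unfolding u_def using \<rho> by simp
    have u: "dist z u = \<delta>" using x \<rho> unfolding xu dist_of_real_mult[OF \<rho>] by simp
    then have "cmod u \<le> cmod z + \<delta>"
      using norm_triangle_sub[of u z] by (simp add: dist_norm norm_minus_commute)
    then have "cmod (poly (eval_y f (of_real r * w)) x - poly P x) < r powr c * \<eta>"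
      using small unfolding xu poly_P poly_eval_y_edge_scaling[OF edge r, folded \<rho>_def] H(1)
      by (simp add: poly_monom)
    also have "\<dots> \<le> cmod (poly P x)"
      using \<eta>[OF u] r unfolding xu poly_P by (simp add: norm_mult)
    finally show "cmod (poly (eval_y f (of_real r * w)) x - poly P x) < cmod (poly P x)" .
  qed
  also have "\<dots> = order z H"
    unfolding P_def using H(2) \<rho> r \<delta> iso by (intro size_proots_scaled_ball) auto
  finally show ?thesis unfolding \<rho>_def .
qed

lemma eval_y_cluster_count:
  assumes f: "f \<noteq> 0" and edge: "lower_edge_line f e m c" and w: "w \<noteq> 0"
    and \<delta>: "0 < \<delta>" "\<delta> < cmod z"
    and iso: "\<And>u. dist z u \<le> \<delta> \<Longrightarrow> u \<noteq> z \<Longrightarrow> poly (eval_y (edge_star f e) w) u \<noteq> 0"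
  shows "eventually (\<lambda>r. size {#x \<in># proots (eval_y f (of_real r * w)).
            x \<in> ball (of_real (r powr - m) * z) (r powr - m * \<delta>)#}
          = order z (eval_y (edge_star f e) w)) (at_right 0)"
proof -
  define h where "h = eval_y (edge_star f e) w"
  define H where "H = monom 1 (edge_left f e) * h"
  have "poly h 0 \<noteq> 0" unfolding h_def by (rule eval_y_edge_star_shape(1)[OF edge w])
  then have h: "h \<noteq> 0" by auto
  then have H: "H \<noteq> 0" unfolding H_def by simp
  have "z \<noteq> 0" using \<delta> by auto
  then have "order z (monom 1 (edge_left f e)) = 0" by (intro order_0I) (simp add: poly_monom)
  then have order_H: "order z H = order z h"
    using order_mult[of "monom 1 (edge_left f e)" h z] h by (simp add: H_def)
  have isoH: "poly H u \<noteq> 0" if "dist z u \<le> \<delta>" "u \<noteq> z" for u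
  proof -
    have "u \<noteq> 0" using that \<delta> by (auto simp: dist_norm)
    then show ?thesis using iso[OF that] unfolding H_def h_def by (simp add: poly_monom)
  qed
  have single_root: "u = z" if "dist z u < \<delta>" "poly H u = 0" for u
    using isoH[of u] that by (cases "u = z") auto
  have "poly H u \<noteq> 0" if "dist z u = \<delta>" for u
    using isoH[of u] that \<delta>(1) by auto
  then obtain \<eta> where \<eta>: "\<eta> > 0" "\<And>u. dist z u = \<delta> \<Longrightarrow> \<eta> \<le> cmod (poly H u)"
    using poly_min_on_sphere[OF \<delta>(1)] by blast
  have "eventually (\<lambda>r. (\<forall>u. cmod u \<le> cmod z + \<delta> \<longrightarrow>
           cmod (\<Sum>(i, j)\<in>supp2 f - edge_supp f e.
              coeff (coeff f i) j * w ^ j * u ^ i * of_real (r powr (real j - m * real i)))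
           < r powr c * \<eta>) \<and> eval_y f (of_real r * w) \<noteq> 0 \<and> r > 0) (at_right 0)"
    by (intro eventually_conj off_edge_terms_small[OF edge \<eta>(1)] eventually_eval_y_nonzero[OF f w]
          eventually_at_right_less)
  then show ?thesis
  proof (rule eventually_mono, elim conjE)
    fix r assume "\<forall>u. cmod u \<le> cmod z + \<delta> \<longrightarrow>
           cmod (\<Sum>(i, j)\<in>supp2 f - edge_supp f e.
              coeff (coeff f i) j * w ^ j * u ^ i * of_real (r powr (real j - m * real i)))
           < r powr c * \<eta>" "eval_y f (of_real r * w) \<noteq> 0" "r > 0"
    then show "size {#x \<in># proots (eval_y f (of_real r * w)).
            x \<in> ball (of_real (r powr - m) * z) (r powr - m * \<delta>)#} = order z (eval_y (edge_star f e) w)"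
      using single_root \<delta>(1) \<eta>(2) unfolding order_H[unfolded h_def, symmetric]
      by (intro eval_y_cluster_count_at[OF edge _ _ H_def[unfolded h_def] H]) auto
  qed
qed

definition edge_slope :: "complex poly poly \<Rightarrow> (real \<times> real) set \<Rightarrow> real" where
  "edge_slope f e = (SOME m. \<exists>c. lower_edge_line f e m c)"

lemma lower_edge_slope:
  assumes "e \<in> lower_edges f"
  obtains c where "lower_edge_line f e (edge_slope f e) c"
proof -
  obtain m c where "lower_edge_line f e m c" by (rule lower_edge_obtain_line[OF assms])
  then have "\<exists>c. lower_edge_line f e (edge_slope f e) c"
    unfolding edge_slope_def by (rule someI_ex[OF exI[of _ m], OF exI])
  then show thesis using that by blast
qed

lemma edge_slope_inj:
  assumes "e \<in> lower_edges f" "e' \<in> lower_edges f" "edge_slope f e = edge_slope f e'"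
  shows "e = e'"
proof -
  obtain c c' where "lower_edge_line f e (edge_slope f e) c" "lower_edge_line f e' (edge_slope f e') c'"
    using lower_edge_slope assms(1,2) by metis
  then show ?thesis using lower_edge_line_same_slope assms(3) by metis
qed

definition edge_roots :: "complex poly poly \<Rightarrow> complex \<Rightarrow> ((real \<times> real) set \<times> complex) set" where
  "edge_roots f w = Sigma (lower_edges f) (\<lambda>e. {z. poly (eval_y (edge_star f e) w) z = 0})"

lemma poly_eval_y_edge_star_0:
  assumes "e \<in> lower_edges f" "w \<noteq> 0"
  shows "poly (eval_y (edge_star f e) w) 0 \<noteq> 0"
  using lower_edge_slope[OF assms(1)] eval_y_edge_star_shape(1) assms(2) by metis

lemma finite_edge_star_roots:
  assumes "e \<in> lower_edges f" "w \<noteq> 0"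
  shows "finite {z. poly (eval_y (edge_star f e) w) z = 0}"
  using poly_eval_y_edge_star_0[OF assms] by (intro poly_roots_finite) auto

lemma finite_edge_roots: "w \<noteq> 0 \<Longrightarrow> finite (edge_roots f w)"
  unfolding edge_roots_def using finite_lower_edges finite_edge_star_roots by blast

lemma edge_roots_nonzero: "(e, z) \<in> edge_roots f w \<Longrightarrow> w \<noteq> 0 \<Longrightarrow> z \<noteq> 0"
  unfolding edge_roots_def using poly_eval_y_edge_star_0 by fastforce

lemma sum_order_edge_roots:
  assumes "f \<noteq> 0" "w \<noteq> 0"
  shows "(\<Sum>(e, z)\<in>edge_roots f w. order z (eval_y (edge_star f e) w)) = degree f - Min (fst ` supp2 f)"
proof -
  have "(\<Sum>z | poly (eval_y (edge_star f e) w) z = 0. order z (eval_y (edge_star f e) w))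
        = edge_right f e - edge_left f e" if e: "e \<in> lower_edges f" for e
  proof -
    obtain c where edge: "lower_edge_line f e (edge_slope f e) c" by (rule lower_edge_slope[OF e])
    have "eval_y (edge_star f e) w \<noteq> 0" using eval_y_edge_star_shape(1)[OF edge assms(2)] by auto
    from size_filter_proots[OF this, of "\<lambda>_. True"] show ?thesis
      using eval_y_edge_star_shape(2)[OF edge assms(2)] by (simp add: size_proots_complex)
  qed
  then have "(\<Sum>(e, z)\<in>edge_roots f w. order z (eval_y (edge_star f e) w))
        = (\<Sum>e\<in>lower_edges f. edge_right f e - edge_left f e)"
    unfolding edge_roots_def
    by (subst sum.Sigma[symmetric]) (use finite_lower_edges finite_edge_star_roots assms(2) in auto)
  then show ?thesis using sum_lower_edge_widths[OF assms(1)] by simp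
qed

lemma proots_eq_sum_replicate:
  assumes "p \<noteq> 0"
  shows "proots p = (\<Sum>z | poly p z = 0. replicate_mset (order z p) z)"
proof (rule multiset_eqI)
  fix x
  have "count (\<Sum>z | poly p z = 0. replicate_mset (order z p) z) x
        = (\<Sum>z | poly p z = 0. if x = z then order z p else 0)"
    by (simp add: count_sum)
  also have "\<dots> = count (proots p) x"
    using poly_roots_finite[OF assms] assms by (simp add: sum.delta eq_commute[of x] order_0I)
  finally show "count (proots p) x = count (\<Sum>z | poly p z = 0. replicate_mset (order z p) z) x" ..
qed

lemma proots_eval_y_fstar:
  assumes "w \<noteq> 0"
  shows "eval_y (fstar f) w \<noteq> 0" "poly (eval_y (fstar f) w) 0 \<noteq> 0"
    and "proots (eval_y (fstar f) w)
         = (\<Sum>(e, z)\<in>edge_roots f w. replicate_mset (order z (eval_y (edge_star f e) w)) z)"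
proof -
  let ?h = "\<lambda>e. eval_y (edge_star f e) w"
  have fstar: "eval_y (fstar f) w = (\<Prod>e\<in>lower_edges f. ?h e)"
    unfolding fstar_def eval_y_prod ..
  have h: "?h e \<noteq> 0" if "e \<in> lower_edges f" for e
    using poly_eval_y_edge_star_0[OF that assms] by auto
  show "poly (eval_y (fstar f) w) 0 \<noteq> 0"
    unfolding fstar poly_prod using poly_eval_y_edge_star_0 assms finite_lower_edges by simp
  then show "eval_y (fstar f) w \<noteq> 0" by auto
  have "proots (eval_y (fstar f) w) = (\<Sum>e\<in>lower_edges f. proots (?h e))"
    unfolding fstar using h by (rule proots_prod)
  also have "\<dots> = (\<Sum>e\<in>lower_edges f. \<Sum>z | poly (?h e) z = 0. replicate_mset (order z (?h e)) z)"
    using h by (intro sum.cong refl proots_eq_sum_replicate)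
  also have "\<dots> = (\<Sum>(e, z)\<in>edge_roots f w. replicate_mset (order z (?h e)) z)"
    unfolding edge_roots_def
    by (subst sum.Sigma) (use finite_lower_edges finite_edge_star_roots assms in auto)
  finally show "proots (eval_y (fstar f) w)
         = (\<Sum>(e, z)\<in>edge_roots f w. replicate_mset (order z (?h e)) z)" .
qed

lemma eventually_scaled_balls_disjoint:
  fixes m m' \<delta> :: real and z z' :: complex
  assumes m: "m < m'" and \<delta>: "0 < \<delta>" and z: "\<delta> < cmod z / 2" and z': "\<delta> < cmod z' / 2"
  shows "eventually (\<lambda>r. ball (of_real (r powr - m) * z) (r powr - m * \<delta>)
                        \<inter> ball (of_real (r powr - m') * z') (r powr - m' * \<delta>) = {}) (at_right 0)"
proof -
  have pos: "cmod z > 0" "cmod z' > 0" using \<delta> z z' by linarith+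
  have "((\<lambda>r::real. r powr (m' - m)) \<longlongrightarrow> 0) (at_right 0)"
    by (intro tendsto_zero_powrI tendsto_ident_at) (auto simp: m eventually_at_right_less[THEN eventually_mono])
  then have "eventually (\<lambda>r. r powr (m' - m) < cmod z' / (3 * cmod z) \<and> r > 0) (at_right 0)"
    using pos by (intro eventually_conj order_tendstoD(2) eventually_at_right_less) auto
  then show ?thesis
  proof (rule eventually_mono, intro equals0I)
    fix r x assume r: "r powr (m' - m) < cmod z' / (3 * cmod z) \<and> r > 0"
    define \<rho> \<rho>' where "\<rho> = r powr - m" and "\<rho>' = r powr - m'"
    assume "x \<in> ball (of_real (r powr - m) * z) (r powr - m * \<delta>)
                 \<inter> ball (of_real (r powr - m') * z') (r powr - m' * \<delta>)"
    then have x: "cmod (x - of_real \<rho> * z) < \<rho> * \<delta>" "cmod (x - of_real \<rho>' * z') < \<rho>' * \<delta>"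
      unfolding \<rho>_def \<rho>'_def by (auto simp: dist_norm norm_minus_commute)
    have \<rho>: "\<rho> > 0" "\<rho>' > 0" "\<rho> = \<rho>' * r powr (m' - m)"
      using r unfolding \<rho>_def \<rho>'_def by (auto simp: powr_add[symmetric])
    have "\<rho>' * cmod z' \<le> cmod x + cmod (x - of_real \<rho>' * z')"
      using norm_triangle_ineq4[of x "x - of_real \<rho>' * z'"] \<rho> by (simp add: norm_mult)
    moreover have "cmod x \<le> \<rho> * cmod z + cmod (x - of_real \<rho> * z)"
      using norm_triangle_sub[of x "of_real \<rho> * z"] \<rho> by (simp add: norm_mult)
    moreover have "\<rho> * \<delta> < \<rho> * (cmod z / 2)" using z \<rho>(1) by (rule mult_strict_left_mono)
    moreover have "\<rho>' * \<delta> < \<rho>' * (cmod z' / 2)" using z' \<rho>(2) by (rule mult_strict_left_mono)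
    ultimately have "\<rho>' * cmod z' < 3 * (\<rho> * cmod z)" using x by linarith
    moreover have "3 * (\<rho> * cmod z) < \<rho>' * cmod z'"
      using r \<rho> pos unfolding \<rho>(3) by (simp add: field_simps)
    ultimately show False by simp
  qed
qed

text \<open>The disc around \<open>r\<^sup>-\<^sup>m z\<close> in which the roots of \<open>f(x, r w)\<close> belonging to the root \<open>z\<close> of
  the edge polynomial of \<open>e\<close> lie, \<open>m\<close> being the slope of \<open>e\<close>.\<close>

definition cluster_ball :: "complex poly poly \<Rightarrow> real \<Rightarrow> real \<Rightarrow> (real \<times> real) set \<times> complex \<Rightarrow> complex set"
  where "cluster_ball f \<delta> r c =
           ball (of_real (r powr - edge_slope f (fst c)) * snd c) (r powr - edge_slope f (fst c) * \<delta>)"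

definition cluster_radius :: "complex poly poly \<Rightarrow> complex \<Rightarrow> real \<Rightarrow> bool" where
  "cluster_radius f w \<delta> \<longleftrightarrow> 0 < \<delta> \<and> (\<forall>c\<in>edge_roots f w. \<delta> < cmod (snd c) / 2 \<and>
     (\<forall>c'\<in>edge_roots f w. fst c' = fst c \<longrightarrow> snd c' \<noteq> snd c \<longrightarrow> 2 * \<delta> < dist (snd c) (snd c')))"

lemma cluster_radius_exists:
  assumes w: "w \<noteq> 0" and \<epsilon>: "\<epsilon> > 0"
  obtains \<delta> where "cluster_radius f w \<delta>"
    and "\<And>c u. c \<in> edge_roots f w \<Longrightarrow> dist (snd c) u < \<delta> \<Longrightarrow> angle_close \<epsilon> (Arg2pi u) (Arg2pi (snd c))"
proof -
  let ?C = "edge_roots f w"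
  have small: "eventually (\<lambda>d::real. d < b) (at_right 0)" if "b > 0" for b
    by (rule eventually_at_rightI[OF _ that]) simp
  have "eventually (\<lambda>d. 0 < d \<and> (\<forall>c\<in>?C. (d < cmod (snd c) / 2 \<and>
      (\<forall>c'\<in>?C. fst c' = fst c \<longrightarrow> snd c' \<noteq> snd c \<longrightarrow> 2 * d < dist (snd c) (snd c'))) \<and>
      (\<forall>u. dist (snd c) u < d \<longrightarrow> angle_close \<epsilon> (Arg2pi u) (Arg2pi (snd c))))) (at_right 0)"
  proof (intro eventually_conj eventually_at_right_less eventually_ball_finite ballI finite_edge_roots[OF w])
    fix c assume c: "c \<in> ?C"
    show "eventually (\<lambda>d. d < cmod (snd c) / 2) (at_right 0)"
      using edge_roots_nonzero[of "fst c" "snd c" f w] c w by (intro small) simp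
    show "eventually (\<lambda>d. \<forall>u. dist (snd c) u < d \<longrightarrow> angle_close \<epsilon> (Arg2pi u) (Arg2pi (snd c))) (at_right 0)"
      using edge_roots_nonzero[of "fst c" "snd c" f w] c w by (intro eventually_angle_close_near \<epsilon>) simp
    fix c' assume "c' \<in> ?C"
    show "eventually (\<lambda>d. fst c' = fst c \<longrightarrow> snd c' \<noteq> snd c \<longrightarrow> 2 * d < dist (snd c) (snd c')) (at_right 0)"
    proof (cases "snd c' = snd c")
      case False
      then have "dist (snd c) (snd c') / 2 > 0" by simp
      then show ?thesis by (rule eventually_mono[OF small]) simp
    qed simp
  qed
  then have "\<exists>\<delta>. 0 < \<delta> \<and> (\<forall>c\<in>?C. (\<delta> < cmod (snd c) / 2 \<and>
      (\<forall>c'\<in>?C. fst c' = fst c \<longrightarrow> snd c' \<noteq> snd c \<longrightarrow> 2 * \<delta> < dist (snd c) (snd c'))) \<and>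
      (\<forall>u. dist (snd c) u < \<delta> \<longrightarrow> angle_close \<epsilon> (Arg2pi u) (Arg2pi (snd c))))"
    by (rule eventually_happens'[rotated]) simp
  then obtain \<delta> where \<delta>: "0 < \<delta>" "\<forall>c\<in>?C. (\<delta> < cmod (snd c) / 2 \<and>
      (\<forall>c'\<in>?C. fst c' = fst c \<longrightarrow> snd c' \<noteq> snd c \<longrightarrow> 2 * \<delta> < dist (snd c) (snd c'))) \<and>
      (\<forall>u. dist (snd c) u < \<delta> \<longrightarrow> angle_close \<epsilon> (Arg2pi u) (Arg2pi (snd c)))"
    by blast
  show thesis
  proof (rule that)
    show "cluster_radius f w \<delta>" unfolding cluster_radius_def using \<delta> by blast
  qed (use \<delta>(2) in blast)
qed

lemma eventually_cluster_count:
  assumes f: "f \<noteq> 0" and w: "w \<noteq> 0" and c: "c \<in> edge_roots f w" and \<delta>: "cluster_radius f w \<delta>"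
  shows "eventually (\<lambda>r. size {#x \<in># proots (eval_y f (of_real r * w)). x \<in> cluster_ball f \<delta> r c#}
                        = order (snd c) (eval_y (edge_star f (fst c)) w)) (at_right 0)"
proof -
  obtain e z where c_eq: "c = (e, z)" by (cases c)
  then have e: "e \<in> lower_edges f" using c by (simp add: edge_roots_def)
  obtain m where edge: "lower_edge_line f e (edge_slope f e) m" by (rule lower_edge_slope[OF e])
  have "eventually (\<lambda>r. size {#x \<in># proots (eval_y f (of_real r * w)).
            x \<in> ball (of_real (r powr - edge_slope f e) * z) (r powr - edge_slope f e * \<delta>)#}
          = order z (eval_y (edge_star f e) w)) (at_right 0)"
  proof (rule eval_y_cluster_count[OF f edge w])
    show "0 < \<delta>" "\<delta> < cmod z" using \<delta> c c_eq unfolding cluster_radius_def by fastforce+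
    fix u assume u: "dist z u \<le> \<delta>" "u \<noteq> z"
    show "poly (eval_y (edge_star f e) w) u \<noteq> 0"
    proof
      assume "poly (eval_y (edge_star f e) w) u = 0"
      then have "(e, u) \<in> edge_roots f w" using e by (simp add: edge_roots_def)
      then have "2 * \<delta> < dist z u" using \<delta> c u(2) unfolding cluster_radius_def c_eq by fastforce
      then show False using u \<delta> unfolding cluster_radius_def by simp
    qed
  qed
  then show ?thesis unfolding cluster_ball_def c_eq by simp
qed

lemma eventually_cluster_balls_disjoint:
  assumes c: "c \<in> edge_roots f w" and c': "c' \<in> edge_roots f w" and "c \<noteq> c'"
    and radius: "cluster_radius f w \<delta>"
  shows "eventually (\<lambda>r. cluster_ball f \<delta> r c \<inter> cluster_ball f \<delta> r c' = {}) (at_right 0)"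
proof -
  have \<delta>: "\<delta> > 0" and small: "\<delta> < cmod (snd c) / 2" "\<delta> < cmod (snd c') / 2"
    using radius c c' unfolding cluster_radius_def by auto
  have sep: "fst c = fst c' \<Longrightarrow> 2 * \<delta> < dist (snd c) (snd c')"
    using radius c c' \<open>c \<noteq> c'\<close> unfolding cluster_radius_def by (auto simp: prod_eq_iff)
  show ?thesis
  proof (cases "fst c = fst c'")
    case True
    show ?thesis using eventually_at_right_less
    proof (rule eventually_mono)
      fix r :: real assume "0 < r"
      define \<rho> where "\<rho> = r powr - edge_slope f (fst c)"
      have \<rho>: "\<rho> > 0" unfolding \<rho>_def using \<open>0 < r\<close> by simp
      have "x \<notin> cluster_ball f \<delta> r c'" if "x \<in> cluster_ball f \<delta> r c" for x
      proof
        assume "x \<in> cluster_ball f \<delta> r c'"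
        with that have "dist (of_real \<rho> * snd c) x < \<rho> * \<delta>" "dist (of_real \<rho> * snd c') x < \<rho> * \<delta>"
          unfolding cluster_ball_def \<rho>_def True by auto
        then have "\<rho> * dist (snd c) (snd c') < \<rho> * (2 * \<delta>)"
          using dist_triangle3[of "of_real \<rho> * snd c" "of_real \<rho> * snd c'" x]
          unfolding dist_of_real_mult[OF \<rho>] by (simp add: dist_commute)
        then show False using sep True \<rho> by simp
      qed
      then show "cluster_ball f \<delta> r c \<inter> cluster_ball f \<delta> r c' = {}" by blast
    qed
  next
    case False
    have "fst c \<in> lower_edges f" "fst c' \<in> lower_edges f" using c c' by (auto simp: edge_roots_def)
    then have "edge_slope f (fst c) \<noteq> edge_slope f (fst c')" using False edge_slope_inj by blast
    then consider "edge_slope f (fst c) < edge_slope f (fst c')" | "edge_slope f (fst c') < edge_slope f (fst c)"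
      by linarith
    then show ?thesis
    proof cases
      case 1
      from eventually_scaled_balls_disjoint[OF 1 \<delta> small] show ?thesis unfolding cluster_ball_def .
    next
      case 2
      from eventually_scaled_balls_disjoint[OF 2 \<delta> small(2,1)] show ?thesis
        unfolding cluster_ball_def by (simp add: Int_commute)
    qed
  qed
qed

lemma cluster_ball_scaled:
  assumes "r > 0" "x \<in> cluster_ball f \<delta> r c"
  obtains \<rho> where "\<rho> > 0" "x = of_real \<rho> * (x / of_real \<rho>)" "dist (snd c) (x / of_real \<rho>) < \<delta>"
proof -
  define \<rho> where "\<rho> = r powr - edge_slope f (fst c)"
  have \<rho>: "\<rho> > 0" unfolding \<rho>_def using assms(1) by simp
  moreover have x: "x = of_real \<rho> * (x / of_real \<rho>)" using \<rho> by simp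
  moreover have "dist (of_real \<rho> * snd c) (of_real \<rho> * (x / of_real \<rho>)) < \<rho> * \<delta>"
    using assms(2) \<rho> unfolding cluster_ball_def \<rho>_def[symmetric] by simp
  then have "dist (snd c) (x / of_real \<rho>) < \<delta>"
    unfolding dist_of_real_mult[OF \<rho>] using \<rho> by simp
  ultimately show thesis by (rule that)
qed

lemma cluster_ball_angle_close:
  assumes "r > 0" "x \<in> cluster_ball f \<delta> r c"
    and "\<And>u. dist (snd c) u < \<delta> \<Longrightarrow> angle_close \<epsilon> (Arg2pi u) (Arg2pi (snd c))"
  shows "angle_close \<epsilon> (Arg2pi x) (Arg2pi (snd c))"
proof -
  obtain \<rho> where \<rho>: "\<rho> > 0" "x = of_real \<rho> * (x / of_real \<rho>)" "dist (snd c) (x / of_real \<rho>) < \<delta>"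
    by (rule cluster_ball_scaled[OF assms(1,2)])
  have "Arg2pi x = Arg2pi (x / of_real \<rho>)"
    by (subst \<rho>(2)) (rule Arg2pi_times_of_real[OF \<rho>(1)])
  then show ?thesis using assms(3)[OF \<rho>(3)] by simp
qed

lemma cluster_ball_nonzero:
  assumes "r > 0" "x \<in> cluster_ball f \<delta> r c" "\<delta> < cmod (snd c)"
  shows "x \<noteq> 0"
proof
  assume "x = 0"
  obtain \<rho> where "\<rho> > 0" "x = of_real \<rho> * (x / of_real \<rho>)" "dist (snd c) (x / of_real \<rho>) < \<delta>"
    by (rule cluster_ball_scaled[OF assms(1,2)])
  then show False using assms(3) \<open>x = 0\<close> by simp
qed

lemma eventually_cluster_structure:
  assumes f: "f \<noteq> 0" and w: "w \<noteq> 0" and \<delta>: "cluster_radius f w \<delta>"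
  shows "eventually (\<lambda>r. r > 0 \<and> eval_y f (of_real r * w) \<noteq> 0 \<and>
      (\<forall>c\<in>edge_roots f w. size {#x \<in># proots (eval_y f (of_real r * w)). x \<in> cluster_ball f \<delta> r c#}
                          = order (snd c) (eval_y (edge_star f (fst c)) w)) \<and>
      (\<forall>c\<in>edge_roots f w. \<forall>c'\<in>edge_roots f w. c \<noteq> c' \<longrightarrow>
                          cluster_ball f \<delta> r c \<inter> cluster_ball f \<delta> r c' = {})) (at_right 0)"
proof (intro eventually_conj eventually_at_right_less eventually_eval_y_nonzero[OF f w]
    eventually_ball_finite ballI finite_edge_roots[OF w])
  fix c c' assume c: "c \<in> edge_roots f w" and c': "c' \<in> edge_roots f w"
  show "eventually (\<lambda>r. c \<noteq> c' \<longrightarrow> cluster_ball f \<delta> r c \<inter> cluster_ball f \<delta> r c' = {}) (at_right 0)"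
  proof (cases "c = c'")
    case False
    show ?thesis using eventually_cluster_balls_disjoint[OF c c' False \<delta>]
      by (rule eventually_mono) (rule impI)
  qed simp
qed (rule eventually_cluster_count[OF f w _ \<delta>])

text \<open>Since the clusters already account for \<open>degree f - min i\<close> roots, an upper bound for the number of
  non-zero roots, there are no non-zero roots outside the clusters.\<close>

lemma nonzero_proots_eq_sum_clusters:
  assumes f: "f \<noteq> 0" and w: "w \<noteq> 0" and r: "r > 0" and G: "eval_y f (of_real r * w) \<noteq> 0"
    and \<delta>: "cluster_radius f w \<delta>"
    and count: "\<forall>c\<in>edge_roots f w. size {#x \<in># proots (eval_y f (of_real r * w)). x \<in> cluster_ball f \<delta> r c#}
                                      = order (snd c) (eval_y (edge_star f (fst c)) w)"
    and disj: "\<forall>c\<in>edge_roots f w. \<forall>c'\<in>edge_roots f w. c \<noteq> c' \<longrightarrow>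
                                      cluster_ball f \<delta> r c \<inter> cluster_ball f \<delta> r c' = {}"
  shows "(\<Sum>c\<in>edge_roots f w. {#x \<in># proots (eval_y f (of_real r * w)). x \<in> cluster_ball f \<delta> r c#})
         = {#z \<in># proots (eval_y f (of_real r * w)). z \<noteq> 0#}"
proof -
  let ?C = "edge_roots f w" and ?A = "{#z \<in># proots (eval_y f (of_real r * w)). z \<noteq> 0#}"
  have cluster: "{#x \<in># ?A. x \<in> cluster_ball f \<delta> r c#}
                 = {#x \<in># proots (eval_y f (of_real r * w)). x \<in> cluster_ball f \<delta> r c#}" if "c \<in> ?C" for c
  proof -
    have "\<delta> < cmod (snd c)" using \<delta> that unfolding cluster_radius_def by fastforce
    then have "x \<noteq> 0" if "x \<in> cluster_ball f \<delta> r c" for x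
      using cluster_ball_nonzero[OF r that] by simp
    then show ?thesis unfolding filter_filter_mset by (intro filter_mset_cong) auto
  qed
  have "size ?A \<le> degree f - Min (fst ` supp2 f)" by (rule size_nonzero_proots_eval_y[OF G])
  also have "\<dots> = (\<Sum>c\<in>?C. size {#x \<in># ?A. x \<in> cluster_ball f \<delta> r c#})"
    using sum_order_edge_roots[OF f w] count cluster unfolding case_prod_unfold by simp
  finally have "(\<Sum>c\<in>?C. {#x \<in># ?A. x \<in> cluster_ball f \<delta> r c#}) = ?A"
    using finite_edge_roots[OF w] disj by (intro sum_filter_mset_eq_if_disjoint) blast+
  then show ?thesis using cluster by simp
qed

lemma eventually_B_eval_y_near_fstar:
  assumes f: "f \<noteq> 0" and w: "w \<noteq> 0"
  shows "eventually (\<lambda>r. \<bar>B (eval_y f (of_real r * w)) - B (eval_y (fstar f) w)\<bar> < 1) (at_right 0)"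
proof -
  let ?C = "edge_roots f w" and ?G = "\<lambda>r. eval_y f (of_real r * w)"
  define N where "N = degree f - Min (fst ` supp2 f)"
  define \<epsilon> where "\<epsilon> = pi / (real N + 1)"
  have \<epsilon>: "\<epsilon> > 0" unfolding \<epsilon>_def by simp
  obtain \<delta> where \<delta>: "cluster_radius f w \<delta>"
    and close: "\<And>c u. c \<in> ?C \<Longrightarrow> dist (snd c) u < \<delta> \<Longrightarrow> angle_close \<epsilon> (Arg2pi u) (Arg2pi (snd c))"
    using cluster_radius_exists[where f = f, OF w \<epsilon>] by blast
  show ?thesis using eventually_cluster_structure[OF f w \<delta>]
  proof (rule eventually_mono, elim conjE)
    fix r :: real assume r: "r > 0" and G: "?G r \<noteq> 0"
      and count: "\<forall>c\<in>?C. size {#x \<in># proots (?G r). x \<in> cluster_ball f \<delta> r c#}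
                            = order (snd c) (eval_y (edge_star f (fst c)) w)"
      and disj: "\<forall>c\<in>?C. \<forall>c'\<in>?C. c \<noteq> c' \<longrightarrow> cluster_ball f \<delta> r c \<inter> cluster_ball f \<delta> r c' = {}"
    define X where "X = (\<lambda>c. {#x \<in># proots (?G r). x \<in> cluster_ball f \<delta> r c#})"
    have A: "(\<Sum>c\<in>?C. X c) = {#z \<in># proots (?G r). z \<noteq> 0#}"
      unfolding X_def by (rule nonzero_proots_eq_sum_clusters[OF f w r G \<delta> count disj])
    have perturb: "\<bar>arc_discrepancy (\<Sum>c\<in>?C. X c) - arc_discrepancy (\<Sum>c\<in>?C. replicate_mset (size (X c)) (snd c))\<bar>
          \<le> real (size (\<Sum>c\<in>?C. X c)) * \<epsilon> / pi"
    proof (rule arc_discrepancy_clusters[OF finite_edge_roots[OF w] _ \<epsilon>])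
      fix c x assume c: "c \<in> ?C" and "x \<in># X c"
      then have "x \<in> cluster_ball f \<delta> r c" unfolding X_def by simp
      then show "angle_close \<epsilon> (Arg2pi x) (Arg2pi (snd c))"
        by (rule cluster_ball_angle_close[OF r]) (rule close[OF c])
    qed
    have centres: "(\<Sum>c\<in>?C. replicate_mset (size (X c)) (snd c)) = proots (eval_y (fstar f) w)"
      unfolding proots_eval_y_fstar(3)[OF w] case_prod_unfold X_def using count by simp
    have nonzero: "{#z \<in># proots (eval_y (fstar f) w). z \<noteq> 0#} = proots (eval_y (fstar f) w)"
      using proots_eval_y_fstar(1,2)[OF w] by (auto simp: filter_mset_eq_conv)
    have "real (size (\<Sum>c\<in>?C. X c)) * \<epsilon> / pi < 1"
      using size_nonzero_proots_eval_y[OF G] unfolding A \<epsilon>_def N_def by (simp add: divide_less_eq)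
    with perturb show "\<bar>B (?G r) - B (eval_y (fstar f) w)\<bar> < 1"
      unfolding B_eq_arc_discrepancy[OF G] B_eq_arc_discrepancy[OF proots_eval_y_fstar(1)[OF w]]
        A centres nonzero
      by linarith
  qed
qed

theorem lemma5p3:
  fixes f :: "complex poly poly"
  assumes "f \<noteq> 0"
  shows "\<forall>\<phi>\<in>{0..<2*pi}. \<exists>r0>0. \<forall>r. 0 < r \<and> r < r0 \<longrightarrow>
           \<bar>B (eval_y f (complex_of_real r * cis \<phi>)) - B (eval_y (fstar f) (cis \<phi>))\<bar> < 1"
proof
  fix \<phi> :: real
  have "eventually (\<lambda>r. \<bar>B (eval_y f (of_real r * cis \<phi>)) - B (eval_y (fstar f) (cis \<phi>))\<bar> < 1)
          (at_right 0)"
    by (rule eventually_B_eval_y_near_fstar[OF assms]) simp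
  then show "\<exists>r0>0. \<forall>r. 0 < r \<and> r < r0 \<longrightarrow>
           \<bar>B (eval_y f (complex_of_real r * cis \<phi>)) - B (eval_y (fstar f) (cis \<phi>))\<bar> < 1"
    unfolding eventually_at_right_field by auto
qed

end
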